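(* Let $0<\mu<\nu<1/2$, $\tau\in(0,1)$, $\Psi(\xi,\eta)=-\frac34\eta(\eta-2\xi)^2$, and $D(\tau)=\{(\zeta,\eta)\in\mathbb R^2:|\zeta|+|\eta|\ge\tau^{-1/3}/10\}$. For $M\ge1$, $$\sup_{\xi,\alpha\in\mathbb R}\int_{\{\eta:(\xi,\eta)\in D(\tau)\}}\max(|\xi|,|\eta|)\frac{\langle\xi\rangle^\mu}{|\eta|^{1/2}\langle\xi-\eta\rangle^\nu}\mathbb 1_{|\Psi(\xi,\eta)-\alpha|<M}\,d\eta\lesssim\sqrt M\,\tau^{\frac{\nu-\mu}{3}},$$ with implicit constant independent of $\tau$ and $M$.
   Context: $\langle\xi\rangle=(1+\xi^2)^{1/2}$. *)

theory Defs
  imports "HOL-Analysis.Analysis"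
begin

definition jb :: "real \<Rightarrow> real" where
  "jb x = sqrt (1 + x\<^sup>2)"

definition Psi :: "real \<Rightarrow> real \<Rightarrow> real" where
  "Psi \<xi> \<eta> = - (3/4) * \<eta> * (\<eta> - 2 * \<xi>)\<^sup>2"

definition Dreg :: "real \<Rightarrow> (real \<times> real) set" where
  "Dreg \<tau> = {(\<zeta>, \<eta>). \<bar>\<zeta>\<bar> + \<bar>\<eta>\<bar> \<ge> \<tau> powr (-1/3) / 10}"

end

theory Submission
  imports Defs
begin

text \<open>
  By the symmetry \<open>(\<xi>, \<eta>, \<alpha>) \<mapsto> (-\<xi>, -\<eta>, -\<alpha>)\<close> we may take \<open>\<xi> \<ge> 0\<close>. The phase factors as
  \<open>\<Psi>(\<xi>,x) - \<Psi>(\<xi>,y) = -(3/4) (x - y) Q(\<xi>,x,y)\<close>, and the \<open>\<eta>\<close>-line splits into finitely many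
  intervals on each of which \<open>|Q|\<close> is bounded below by \<open>\<xi>\<^sup>2\<close>, by \<open>max(x\<^sup>2, y\<^sup>2)\<close>, or (on either side of
  the critical points \<open>2\<xi>/3\<close> and \<open>2\<xi>\<close> of \<open>\<Psi>(\<xi>,\<cdot>)\<close>) by \<open>\<xi> |x - y|\<close>. Accordingly the part of the
  set \<open>{|\<Psi>(\<xi>,\<cdot>) - \<alpha>| < M}\<close> in such an interval has length \<open>O(M/\<xi>\<^sup>2)\<close>, satisfies
  \<open>|x - y| max(x\<^sup>2, y\<^sup>2) = O(M)\<close>, or has length \<open>O((M/\<xi>)\<^sup>1\<^sup>/\<^sup>2)\<close>. There the weight is a power of \<open>\<xi>\<close>
  or \<open>|\<eta>|\<close> times at worst an integrable singularity \<open>|\<eta>|\<^sup>-\<^sup>1\<^sup>/\<^sup>2\<close> or \<open>|\<eta> - \<xi>|\<^sup>-\<^sup>\<nu>\<close>, and its integral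
  is \<open>O(\<surd>M \<lambda>\<^sup>\<mu>\<^sup>-\<^sup>\<nu>)\<close> with \<open>\<lambda>\<close> comparable to \<open>\<xi>\<close> or \<open>|\<eta>|\<close>. On \<open>D(\<tau>)\<close> this \<open>\<lambda>\<close> is at least a
  multiple of \<open>R = \<tau>\<^sup>-\<^sup>1\<^sup>/\<^sup>3/10\<close>, and \<open>R\<^sup>\<mu>\<^sup>-\<^sup>\<nu> \<le> 10 \<tau>\<^sup>(\<^sup>\<nu>\<^sup>-\<^sup>\<mu>\<^sup>)\<^sup>/\<^sup>3\<close>.
\<close>

section \<open>Upper integrals\<close>

text \<open>
  Working with
  Borel majorants removes every measurability side condition on \<open>f\<close> and \<open>T\<close>.
\<close>

definition upper_integral_le :: "(real \<Rightarrow> ennreal) \<Rightarrow> real set \<Rightarrow> ennreal \<Rightarrow> bool" where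
  "upper_integral_le f T B \<longleftrightarrow>
     (\<exists>g \<in> borel_measurable borel. (\<forall>x. f x * indicator T x \<le> g x) \<and> integral\<^sup>N lborel g \<le> B)"

lemma upper_integral_leI:
  "g \<in> borel_measurable borel \<Longrightarrow> (\<And>x. f x * indicator T x \<le> g x) \<Longrightarrow> integral\<^sup>N lborel g \<le> B
    \<Longrightarrow> upper_integral_le f T B"
  unfolding upper_integral_le_def by blast

lemma set_nn_integral_le_if_upper_integral_le:
  assumes "upper_integral_le f T B"
  shows "(\<integral>\<^sup>+x\<in>T. f x \<partial>lborel) \<le> B"
proof -
  obtain g where g: "\<And>x. f x * indicator T x \<le> g x" "integral\<^sup>N lborel g \<le> B"
    using assms unfolding upper_integral_le_def by blast
  have "(\<integral>\<^sup>+x\<in>T. f x \<partial>lborel) \<le> integral\<^sup>N lborel g"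
    by (rule nn_integral_mono) (rule g(1))
  then show ?thesis
    using g(2) by (rule order_trans)
qed

lemma upper_integral_le_mono:
  assumes "upper_integral_le f T B" "T' \<subseteq> T" "\<And>x. x \<in> T' \<Longrightarrow> f' x \<le> f x" "B \<le> B'"
  shows "upper_integral_le f' T' B'"
proof -
  obtain g where g: "g \<in> borel_measurable borel" "\<And>x. f x * indicator T x \<le> g x"
    "integral\<^sup>N lborel g \<le> B"
    using assms(1) unfolding upper_integral_le_def by blast
  have "f' x * indicator T' x \<le> g x" for x
  proof (cases "x \<in> T'")
    case True
    then have "f' x * indicator T' x \<le> f x * indicator T x"
      using assms(2) assms(3)[of x] by (auto simp: indicator_def)
    also have "\<dots> \<le> g x"
      by (rule g(2))
    finally show ?thesis .
  qed simp
  then show ?thesis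
    by (rule upper_integral_leI[OF g(1)]) (rule order_trans[OF g(3) assms(4)])
qed

lemma upper_integral_le_bound_mono:
  "upper_integral_le f T B \<Longrightarrow> B \<le> B' \<Longrightarrow> upper_integral_le f T B'"
  by (erule upper_integral_le_mono) auto

lemma upper_integral_le_empty: "upper_integral_le f {} B"
  by (rule upper_integral_leI[of "\<lambda>_. 0"]) auto

lemma upper_integral_le_from_point:
  assumes "\<And>x0. x0 \<in> T \<Longrightarrow> upper_integral_le f T B"
  shows "upper_integral_le f T B"
proof (cases "T = {}")
  case True
  then show ?thesis
    by (simp add: upper_integral_le_empty)
next
  case False
  then obtain x0 where "x0 \<in> T"
    by blast
  then show ?thesis
    by (rule assms)
qed

lemma upper_integral_le_Un:
  assumes "upper_integral_le f T1 B1" "upper_integral_le f T2 B2"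
  shows "upper_integral_le f (T1 \<union> T2) (B1 + B2)"
proof -
  obtain g1 where g1: "g1 \<in> borel_measurable borel" "\<And>x. f x * indicator T1 x \<le> g1 x"
    "integral\<^sup>N lborel g1 \<le> B1"
    using assms(1) unfolding upper_integral_le_def by blast
  obtain g2 where g2: "g2 \<in> borel_measurable borel" "\<And>x. f x * indicator T2 x \<le> g2 x"
    "integral\<^sup>N lborel g2 \<le> B2"
    using assms(2) unfolding upper_integral_le_def by blast
  show ?thesis
  proof (rule upper_integral_leI[of "\<lambda>x. g1 x + g2 x"])
    show "f x * indicator (T1 \<union> T2) x \<le> g1 x + g2 x" for x
    proof (cases "x \<in> T1")
      case True
      then have "f x * indicator (T1 \<union> T2) x = f x * indicator T1 x"
        by (simp add: indicator_def)
      also have "\<dots> \<le> g1 x"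
        by (rule g1(2))
      also have "\<dots> \<le> g1 x + g2 x"
        by (rule add_increasing2) simp_all
      finally show ?thesis .
    next
      case False
      then have "f x * indicator (T1 \<union> T2) x = f x * indicator T2 x"
        by (auto simp: indicator_def)
      also have "\<dots> \<le> g2 x"
        by (rule g2(2))
      also have "\<dots> \<le> g1 x + g2 x"
        by (rule add_increasing) simp_all
      finally show ?thesis .
    qed
    have "(\<integral>\<^sup>+x. g1 x + g2 x \<partial>lborel) = integral\<^sup>N lborel g1 + integral\<^sup>N lborel g2"
      using g1 g2 by (intro nn_integral_add) auto
    then show "(\<integral>\<^sup>+x. g1 x + g2 x \<partial>lborel) \<le> B1 + B2"
      using g1 g2 by (simp add: add_mono)
  qed (use g1 g2 in measurable)
qed

lemma upper_integral_le_UN: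
  assumes "finite I" "\<And>i. i \<in> I \<Longrightarrow> upper_integral_le f (T i) B"
  shows "upper_integral_le f (\<Union>i\<in>I. T i) (of_nat (card I) * B)"
  using assms
proof (induction I rule: finite_induct)
  case empty
  then show ?case by (simp add: upper_integral_le_empty)
next
  case (insert i I)
  then have "upper_integral_le f (T i \<union> (\<Union>i\<in>I. T i)) (B + of_nat (card I) * B)"
    by (intro upper_integral_le_Un) auto
  with insert.hyps show ?case
    by (simp add: distrib_right)
qed

text \<open>The majorant may be \<open>\<infinity>\<close> on the null set \<open>{p}\<close>, so nothing about \<open>f p\<close> is needed.\<close>

lemma upper_integral_le_insert:
  assumes "upper_integral_le f T B"
  shows "upper_integral_le f (insert p T) B"
proof -
  obtain g where g: "g \<in> borel_measurable borel" "\<And>x. f x * indicator T x \<le> g x"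
    "integral\<^sup>N lborel g \<le> B"
    using assms(1) unfolding upper_integral_le_def by blast
  show ?thesis
  proof (rule upper_integral_leI[of "\<lambda>x. g x + \<infinity> * indicator {p} x"])
    show "f x * indicator (insert p T) x \<le> g x + \<infinity> * indicator {p} x" for x
      using g(2)[of x] by (cases "x = p") (auto simp: indicator_def)
    have "(\<integral>\<^sup>+x. g x + \<infinity> * indicator {p} x \<partial>lborel)
        = integral\<^sup>N lborel g + (\<integral>\<^sup>+x. \<infinity> * indicator {p} x \<partial>lborel)"
      using g by (intro nn_integral_add) auto
    also have "(\<integral>\<^sup>+x. \<infinity> * indicator {p} x \<partial>lborel) = 0"
      by (simp add: nn_integral_cmult_indicator)
    finally show "(\<integral>\<^sup>+x. g x + \<infinity> * indicator {p} x \<partial>lborel) \<le> B"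
      using g by simp
  qed (use g in measurable)
qed

lemma upper_integral_le_reflect:
  assumes "upper_integral_le f T B"
  shows "upper_integral_le (\<lambda>x. f (-x)) (uminus ` T) B"
proof -
  obtain g where g: "g \<in> borel_measurable borel" "\<And>x. f x * indicator T x \<le> g x"
    "integral\<^sup>N lborel g \<le> B"
    using assms(1) unfolding upper_integral_le_def by blast
  show ?thesis
  proof (rule upper_integral_leI[of "\<lambda>x. g (-x)"])
    have "indicator (uminus ` T) x = (indicator T (-x) :: ennreal)" for x
      by (auto simp: indicator_def image_iff intro: bexI[of _ "-x"])
    then show "f (-x) * indicator (uminus ` T) x \<le> g (-x)" for x
      using g(2)[of "-x"] by simp
    show "(\<integral>\<^sup>+x. g (-x) \<partial>lborel) \<le> B"
      using nn_integral_real_affine[OF g(1), of "-1" 0] g(3) by simp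
  qed (use g in measurable)
qed

lemma upper_integral_le_bounded_on_ball:
  assumes "T \<subseteq> cball c r" "\<And>x. x \<in> T \<Longrightarrow> f x \<le> ennreal K" "0 \<le> K" "0 \<le> r"
  shows "upper_integral_le f T (ennreal (2 * K * r))"
proof (rule upper_integral_leI[of "\<lambda>x. ennreal K * indicator (cball c r) x"])
  show "f x * indicator T x \<le> ennreal K * indicator (cball c r) x" for x
    using assms(1) assms(2)[of x] by (auto simp: indicator_def)
  have "(\<integral>\<^sup>+x. ennreal K * indicator (cball c r) x \<partial>lborel) = ennreal K * emeasure lborel (cball c r)"
    by (intro nn_integral_cmult_indicator) (simp add: cball_eq_atLeastAtMost)
  also have "\<dots> = ennreal (2 * K * r)"
    using assms(3,4) by (simp add: cball_eq_atLeastAtMost ennreal_mult[symmetric])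
  finally show "(\<integral>\<^sup>+x. ennreal K * indicator (cball c r) x \<partial>lborel) \<le> ennreal (2 * K * r)"
    by simp
qed (simp add: cball_eq_atLeastAtMost)

lemma nn_integral_powr_atLeastAtMost_0:
  assumes "0 \<le> a" "a < 1" "0 \<le> r"
  shows "(\<integral>\<^sup>+x. ennreal (x powr (-a)) * indicator {0..r} x \<partial>lborel) = ennreal (r powr (1 - a) / (1 - a))"
proof -
  have "((\<lambda>x. x powr (-a)) has_integral (r powr (-a + 1) / (-a + 1))) {0..r}"
    by (rule has_integral_powr_from_0) (use assms in auto)
  then show ?thesis
    by (subst nn_integral_has_integral_lebesgue') auto
qed

lemma nn_integral_abs_powr_cball_le:
  assumes "0 \<le> a" "a < 1" "0 \<le> r"
  shows "(\<integral>\<^sup>+x. ennreal (\<bar>x - p\<bar> powr (-a)) * indicator (cball p r) x \<partial>lborel)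
    \<le> ennreal (2 * r powr (1 - a) / (1 - a))"
proof -
  let ?h = "\<lambda>x. ennreal (x powr (-a)) * indicator {0..r} x"
  have meas: "(\<lambda>x. ennreal (\<bar>x - p\<bar> powr (-a)) * indicator (cball p r) x) \<in> borel_measurable borel"
    by (simp add: cball_eq_atLeastAtMost)
  have "(\<integral>\<^sup>+x. ennreal (\<bar>x - p\<bar> powr (-a)) * indicator (cball p r) x \<partial>lborel)
      = (\<integral>\<^sup>+x. ennreal (\<bar>x\<bar> powr (-a)) * indicator (cball p r) (p + x) \<partial>lborel)"
    using nn_integral_real_affine[OF meas, of 1 p] by simp
  also have "\<dots> \<le> (\<integral>\<^sup>+x. ?h x + ?h (-x) \<partial>lborel)"
    by (intro nn_integral_mono) (auto simp: indicator_def dist_real_def abs_if)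
  also have "\<dots> = (\<integral>\<^sup>+x. ?h x \<partial>lborel) + (\<integral>\<^sup>+x. ?h (-x) \<partial>lborel)"
    by (intro nn_integral_add) auto
  also have "(\<integral>\<^sup>+x. ?h (-x) \<partial>lborel) = (\<integral>\<^sup>+x. ?h x \<partial>lborel)"
    using nn_integral_real_affine[of ?h "-1" 0] by simp
  also have "(\<integral>\<^sup>+x. ?h x \<partial>lborel) = ennreal (r powr (1 - a) / (1 - a))"
    by (rule nn_integral_powr_atLeastAtMost_0) (use assms in auto)
  finally show ?thesis
    using assms by (simp add: ennreal_plus[symmetric] del: ennreal_plus)
qed

lemma upper_integral_le_singular_on_ball:
  assumes "T \<subseteq> cball c d" "\<And>x. x \<in> T \<Longrightarrow> x \<noteq> p \<Longrightarrow> f x \<le> ennreal (K * \<bar>x - p\<bar> powr (-a))"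
    and "0 \<le> K" "0 < d" "0 \<le> a" "a < 1"
  shows "upper_integral_le f T (ennreal (K * (2 / (1 - a) + 2) * d powr (1 - a)))"
proof -
  let ?g = "\<lambda>x. ennreal K * (ennreal (\<bar>x - p\<bar> powr (-a)) * indicator (cball p d) x)"
  have near: "upper_integral_le f (T \<inter> cball p d - {p}) (ennreal (K * (2 * d powr (1 - a) / (1 - a))))"
  proof (rule upper_integral_leI[of ?g])
    show "f x * indicator (T \<inter> cball p d - {p}) x \<le> ?g x" for x
      using assms(2)[of x] assms(3) by (auto simp: indicator_def ennreal_mult)
    have "integral\<^sup>N lborel ?g
        = ennreal K * (\<integral>\<^sup>+x. ennreal (\<bar>x - p\<bar> powr (-a)) * indicator (cball p d) x \<partial>lborel)"
      by (intro nn_integral_cmult) (simp add: cball_eq_atLeastAtMost)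
    also have "\<dots> \<le> ennreal K * ennreal (2 * d powr (1 - a) / (1 - a))"
      using nn_integral_abs_powr_cball_le[of a d p] assms(4-6) by (intro mult_left_mono) auto
    finally show "integral\<^sup>N lborel ?g \<le> ennreal (K * (2 * d powr (1 - a) / (1 - a)))"
      using assms(3,6) by (simp add: ennreal_mult[symmetric])
  qed (simp add: cball_eq_atLeastAtMost)
  have far: "upper_integral_le f (T - cball p d) (ennreal (2 * (K * d powr (-a)) * d))"
  proof (rule upper_integral_le_bounded_on_ball)
    show "f x \<le> ennreal (K * d powr (-a))" if "x \<in> T - cball p d" for x
    proof -
      have "d < \<bar>x - p\<bar>"
        using that by (simp add: dist_real_def abs_minus_commute)
      then have "x \<noteq> p"
        using assms(4) by auto
      then have "f x \<le> ennreal (K * \<bar>x - p\<bar> powr (-a))"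
        using assms(2) that by blast
      also have "\<dots> \<le> ennreal (K * d powr (-a))"
        using \<open>d < \<bar>x - p\<bar>\<close> assms(3-5) by (intro ennreal_leI mult_left_mono powr_mono2') auto
      finally show ?thesis .
    qed
  qed (use assms in auto)
  have "d * d powr (-a) = d powr (1 - a)"
    using assms(4) by (simp add: powr_diff powr_minus_divide)
  then have "K * (2 * d powr (1 - a) / (1 - a)) + 2 * (K * d powr (-a)) * d
      = K * (2 / (1 - a) + 2) * d powr (1 - a)"
    by (simp add: algebra_simps)
  then have sum: "ennreal (K * (2 * d powr (1 - a) / (1 - a))) + ennreal (2 * (K * d powr (-a)) * d)
      = ennreal (K * (2 / (1 - a) + 2) * d powr (1 - a))"
    using assms(3-6) by (simp add: ennreal_plus[symmetric] del: ennreal_plus)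
  have "upper_integral_le f (insert p ((T \<inter> cball p d - {p}) \<union> (T - cball p d)))
      (ennreal (K * (2 * d powr (1 - a) / (1 - a))) + ennreal (2 * (K * d powr (-a)) * d))"
    by (intro upper_integral_le_insert upper_integral_le_Un near far)
  then show ?thesis
    unfolding sum by (rule upper_integral_le_mono) auto
qed

text \<open>
  Sets of this shape behave like sublevel sets of \<open>x\<^sup>3\<close>: near the origin they have length about
  \<open>K0\<^sup>1\<^sup>/\<^sup>3\<close>, and around a point of size \<open>X\<close> length about \<open>K0 / X\<^sup>2\<close>.
\<close>

lemma upper_integral_le_sqrt_on_cubic_set_away_from_0:
  assumes "0 < \<rho>" "0 \<le> K"
    and width: "\<And>x y. x \<in> T \<Longrightarrow> y \<in> T \<Longrightarrow> \<bar>x - y\<bar> * max (x\<^sup>2) (y\<^sup>2) \<le> \<rho> ^ 3"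
    and large: "\<And>x. x \<in> T \<Longrightarrow> 2 * \<rho> < \<bar>x\<bar>"
    and f_le: "\<And>x. x \<in> T \<Longrightarrow> f x \<le> ennreal (K * sqrt \<bar>x\<bar>)"
  shows "upper_integral_le f T (ennreal (K * sqrt (\<rho> ^ 3)))"
proof (rule upper_integral_le_from_point)
  fix x0 assume x0: "x0 \<in> T"
  define X where "X = \<bar>x0\<bar>"
  define r where "r = \<rho> ^ 3 / X\<^sup>2"
  have X: "2 * \<rho> < X" "0 < X"
    using large[OF x0] \<open>0 < \<rho>\<close> by (auto simp: X_def)
  have "(2 * \<rho>) ^ 3 \<le> X ^ 3"
    using X \<open>0 < \<rho>\<close> by (intro power_mono) auto
  then have cube: "8 * \<rho> ^ 3 \<le> X ^ 3"
    by (simp add: power_mult_distrib)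
  have close: "\<bar>y - x0\<bar> \<le> r" if "y \<in> T" for y
  proof -
    have "\<bar>y - x0\<bar> * X\<^sup>2 \<le> \<bar>y - x0\<bar> * max (y\<^sup>2) (x0\<^sup>2)"
      by (intro mult_left_mono) (auto simp: X_def)
    also have "\<dots> \<le> \<rho> ^ 3"
      using width that x0 by blast
    finally show ?thesis
      using X by (simp add: r_def le_divide_eq)
  qed
  have "0 < \<rho> ^ 3"
    using \<open>0 < \<rho>\<close> by simp
  moreover have "X ^ 3 = X * X\<^sup>2"
    by algebra
  ultimately have "\<rho> ^ 3 \<le> X * X\<^sup>2"
    using cube by linarith
  then have "r \<le> X"
    using X by (simp add: r_def divide_le_eq)
  have "f y \<le> ennreal (K * sqrt (2 * X))" if "y \<in> T" for y
  proof -
    have "\<bar>y\<bar> \<le> 2 * X"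
      using close[OF that] \<open>r \<le> X\<close> unfolding X_def by arith
    then have "ennreal (K * sqrt \<bar>y\<bar>) \<le> ennreal (K * sqrt (2 * X))"
      using assms(2) by (intro ennreal_leI mult_left_mono) auto
    with f_le[OF that] show ?thesis
      by (rule order_trans)
  qed
  moreover have "T \<subseteq> cball x0 r"
    using close by (auto simp: dist_real_def abs_minus_commute)
  ultimately have "upper_integral_le f T (ennreal (2 * (K * sqrt (2 * X)) * r))"
    using X \<open>0 < \<rho>\<close> assms(2) by (intro upper_integral_le_bounded_on_ball) (auto simp: r_def)
  moreover have "2 * (K * sqrt (2 * X)) * r \<le> K * sqrt (\<rho> ^ 3)"
  proof -
    have "(sqrt (2 * X))\<^sup>2 = 2 * X"
      using X by simp
    then have "(2 * sqrt (2 * X) * r)\<^sup>2 = 8 * \<rho> ^ 3 / X ^ 3 * \<rho> ^ 3"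
      using X by (simp add: r_def power_mult_distrib power_divide field_simps power2_eq_square power3_eq_cube)
    also have "\<dots> \<le> 1 * \<rho> ^ 3"
    proof (rule mult_right_mono)
      show "8 * \<rho> ^ 3 / X ^ 3 \<le> 1"
        using cube X by simp
    qed (use \<open>0 < \<rho>\<close> in simp)
    finally have "2 * sqrt (2 * X) * r \<le> sqrt (\<rho> ^ 3)"
      by (intro real_le_rsqrt) simp
    then show ?thesis
      using assms(2) by (metis mult.assoc mult.left_commute mult_left_mono)
  qed
  ultimately show "upper_integral_le f T (ennreal (K * sqrt (\<rho> ^ 3)))"
    by (elim upper_integral_le_bound_mono) (rule ennreal_leI)
qed

lemma upper_integral_le_sqrt_on_cubic_set:
  assumes "0 < K0" "0 \<le> K"
    and width: "\<And>x y. x \<in> T \<Longrightarrow> y \<in> T \<Longrightarrow> \<bar>x - y\<bar> * max (x\<^sup>2) (y\<^sup>2) \<le> K0"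
    and f_le: "\<And>x. x \<in> T \<Longrightarrow> f x \<le> ennreal (K * sqrt \<bar>x\<bar>)"
  shows "upper_integral_le f T (ennreal (7 * K * sqrt K0))"
proof -
  define \<rho> where "\<rho> = K0 powr (1/3)"
  have "0 < \<rho>"
    using assms by (simp add: \<rho>_def)
  have \<rho>3: "\<rho> ^ 3 = K0"
    using assms by (simp add: \<rho>_def powr_powr flip: powr_realpow)
  have near: "upper_integral_le f (T \<inter> {x. \<bar>x\<bar> \<le> 2 * \<rho>}) (ennreal (6 * K * sqrt K0))"
  proof -
    have "f x \<le> ennreal (K * sqrt (2 * \<rho>))" if "x \<in> T \<inter> {x. \<bar>x\<bar> \<le> 2 * \<rho>}" for x
    proof -
      have "f x \<le> ennreal (K * sqrt \<bar>x\<bar>)"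
        using f_le that by blast
      also have "\<dots> \<le> ennreal (K * sqrt (2 * \<rho>))"
        using that assms(2) by (intro ennreal_leI mult_left_mono) auto
      finally show ?thesis .
    qed
    then have "upper_integral_le f (T \<inter> {x. \<bar>x\<bar> \<le> 2 * \<rho>}) (ennreal (2 * (K * sqrt (2 * \<rho>)) * (2 * \<rho>)))"
      using \<open>0 < \<rho>\<close> assms(2) by (intro upper_integral_le_bounded_on_ball[where c = 0]) auto
    moreover have "2 * (K * sqrt (2 * \<rho>)) * (2 * \<rho>) \<le> 6 * K * sqrt K0"
    proof -
      have "(sqrt (2 * \<rho>))\<^sup>2 = 2 * \<rho>"
        using \<open>0 < \<rho>\<close> by simp
      then have "(2 * \<rho> * sqrt (2 * \<rho>))\<^sup>2 \<le> 9 * K0"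
        unfolding power_mult_distrib using \<rho>3 assms(1) by (simp add: power2_eq_square power3_eq_cube)
      then have "2 * \<rho> * sqrt (2 * \<rho>) \<le> sqrt (9 * K0)"
        by (rule real_le_rsqrt)
      also have "\<dots> = 3 * sqrt K0"
        by (simp add: real_sqrt_mult)
      finally have "K * (2 * (2 * \<rho> * sqrt (2 * \<rho>))) \<le> K * (2 * (3 * sqrt K0))"
        using assms(2) by (intro mult_left_mono) auto
      then show ?thesis
        by (simp add: algebra_simps)
    qed
    ultimately show ?thesis
      by (elim upper_integral_le_bound_mono) (rule ennreal_leI)
  qed
  have far: "upper_integral_le f (T \<inter> {x. 2 * \<rho> < \<bar>x\<bar>}) (ennreal (K * sqrt K0))"
    using \<open>0 < \<rho>\<close> assms(2) width f_le
    by (intro upper_integral_le_sqrt_on_cubic_set_away_from_0[of \<rho>, unfolded \<rho>3]) auto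
  have "upper_integral_le f T (ennreal (6 * K * sqrt K0) + ennreal (K * sqrt K0))"
    by (rule upper_integral_le_mono[OF upper_integral_le_Un[OF near far]]) auto
  then show ?thesis
    using assms(1,2) by (simp add: ennreal_plus[symmetric] mult.assoc del: ennreal_plus)
qed

section \<open>The phase function\<close>

definition Psi_quot :: "real \<Rightarrow> real \<Rightarrow> real \<Rightarrow> real" where
  "Psi_quot \<xi> x y = x\<^sup>2 + x * y + y\<^sup>2 - 4 * \<xi> * (x + y) + 4 * \<xi>\<^sup>2"

lemma Psi_diff: "Psi \<xi> x - Psi \<xi> y = - (3/4) * (x - y) * Psi_quot \<xi> x y"
  unfolding Psi_def Psi_quot_def power2_eq_square by algebra

lemma abs_Psi_diff: "\<bar>Psi \<xi> x - Psi \<xi> y\<bar> = 3/4 * \<bar>x - y\<bar> * \<bar>Psi_quot \<xi> x y\<bar>"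
  unfolding Psi_diff abs_mult by simp

lemma Psi_minus: "Psi (-\<xi>) (-\<eta>) = - Psi \<xi> \<eta>"
  unfolding Psi_def by (simp add: power2_eq_square algebra_simps)

text \<open>
  The lower bounds on \<open>Psi_quot\<close> below are certified by writing the difference as a polynomial
  with nonnegative coefficients in the distances of \<open>x\<close>, \<open>y\<close> to the interval endpoints.
\<close>

lemma Psi_quot_ge_near_origin:
  assumes "0 \<le> \<xi>" "\<bar>x\<bar> \<le> \<xi>/2" "\<bar>y\<bar> \<le> \<xi>/2"
  shows "3/4 * \<xi>\<^sup>2 \<le> Psi_quot \<xi> x y"
proof -
  define a b where "a = \<xi>/2 - x" and "b = \<xi>/2 - y"
  have "0 \<le> a" "0 \<le> b"
    using assms by (auto simp: a_def b_def)
  then have "0 \<le> 5/2 * (\<xi> * a) + 5/2 * (\<xi> * b) + a * a + a * b + b * b"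
    using assms(1) by simp
  moreover have "Psi_quot \<xi> x y - 3/4 * \<xi>\<^sup>2 = 5/2 * (\<xi> * a) + 5/2 * (\<xi> * b) + a * a + a * b + b * b"
    unfolding Psi_quot_def power2_eq_square a_def b_def by (simp add: field_simps)
  ultimately show ?thesis
    by linarith
qed

lemma Psi_quot_ge_negative:
  assumes "0 \<le> \<xi>" "x \<le> 0" "y \<le> 0"
  shows "max (x\<^sup>2) (y\<^sup>2) \<le> Psi_quot \<xi> x y"
proof -
  have "0 \<le> x * y" "0 \<le> \<xi> * (-x)" "0 \<le> \<xi> * (-y)" "0 \<le> \<xi> * \<xi>"
    using assms by (simp_all add: mult_nonpos_nonpos mult_nonneg_nonpos)
  moreover have "Psi_quot \<xi> x y - y\<^sup>2 = x * x + x * y + 4 * (\<xi> * (-x)) + 4 * (\<xi> * (-y)) + 4 * (\<xi> * \<xi>)"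
    "Psi_quot \<xi> x y - x\<^sup>2 = y * y + x * y + 4 * (\<xi> * (-x)) + 4 * (\<xi> * (-y)) + 4 * (\<xi> * \<xi>)"
    unfolding Psi_quot_def power2_eq_square by (simp_all add: field_simps)
  moreover have "0 \<le> x * x" "0 \<le> y * y"
    by simp_all
  ultimately have "y\<^sup>2 \<le> Psi_quot \<xi> x y" "x\<^sup>2 \<le> Psi_quot \<xi> x y"
    by linarith+
  then show ?thesis
    by simp
qed

lemma Psi_quot_ge_far:
  assumes "0 \<le> \<xi>" "3 * \<xi> \<le> x" "3 * \<xi> \<le> y"
  shows "max (x\<^sup>2) (y\<^sup>2) \<le> 3 * Psi_quot \<xi> x y"
proof -
  have x: "3 * Psi_quot \<xi> x y - x\<^sup>2
      = (x - y) * (2 * x + y) + 4 * (x * (y - 3 * \<xi>)) + 4 * (y * (y - 3 * \<xi>)) + 12 * (\<xi> * \<xi>)"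
    and y: "3 * Psi_quot \<xi> x y - y\<^sup>2
      = (y - x) * (2 * y + x) + 4 * (y * (x - 3 * \<xi>)) + 4 * (x * (x - 3 * \<xi>)) + 12 * (\<xi> * \<xi>)"
    unfolding Psi_quot_def power2_eq_square by (simp_all add: field_simps)
  show ?thesis
  proof (cases "y \<le> x")
    case True
    then have "y\<^sup>2 \<le> x\<^sup>2"
      using assms by (intro power_mono) auto
    moreover have "0 \<le> (x - y) * (2 * x + y) + 4 * (x * (y - 3 * \<xi>)) + 4 * (y * (y - 3 * \<xi>)) + 12 * (\<xi> * \<xi>)"
      using assms True by (intro add_nonneg_nonneg mult_nonneg_nonneg) auto
    ultimately show ?thesis
      using x by (simp add: max_def)
  next
    case False
    then have "x\<^sup>2 \<le> y\<^sup>2"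
      using assms by (intro power_mono) auto
    moreover have "0 \<le> (y - x) * (2 * y + x) + 4 * (y * (x - 3 * \<xi>)) + 4 * (x * (x - 3 * \<xi>)) + 12 * (\<xi> * \<xi>)"
      using assms False by (intro add_nonneg_nonneg mult_nonneg_nonneg) auto
    ultimately show ?thesis
      using y by (simp add: max_def)
  qed
qed

lemma Psi_quot_le_near_diagonal:
  assumes "0 \<le> \<xi>" "5 * \<xi>/6 \<le> x" "x \<le> 3 * \<xi>/2" "5 * \<xi>/6 \<le> y" "y \<le> 3 * \<xi>/2"
  shows "\<xi>\<^sup>2/2 \<le> - Psi_quot \<xi> x y"
proof -
  define a b p q where "a = x - 5 * \<xi>/6" and "b = y - 5 * \<xi>/6" and "p = 3 * \<xi>/2 - x" and "q = 3 * \<xi>/2 - y"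
  have "0 \<le> a" "0 \<le> b" "0 \<le> p" "0 \<le> q"
    using assms by (auto simp: a_def b_def p_def q_def)
  then have "0 \<le> 1/12 * (\<xi> * \<xi>) + 1/2 * (\<xi> * a) + 1/2 * (\<xi> * b)
      + 1/2 * ((a - b) * (a - b)) + 3/2 * (a * p) + 3/2 * (b * q)"
    using assms(1) by simp
  moreover have "- Psi_quot \<xi> x y - \<xi>\<^sup>2/2 = 1/12 * (\<xi> * \<xi>) + 1/2 * (\<xi> * a) + 1/2 * (\<xi> * b)
      + 1/2 * ((a - b) * (a - b)) + 3/2 * (a * p) + 3/2 * (b * q)"
    unfolding Psi_quot_def power2_eq_square a_def b_def p_def q_def by (simp add: field_simps)
  ultimately show ?thesis
    by linarith
qed

text \<open>
  \<open>Psi \<xi>\<close> has a local minimum at \<open>2\<xi>/3\<close> and a local maximum at \<open>2\<xi>\<close>, where its second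
  derivative is \<open>\<plusminus>3\<xi>\<close>.
\<close>

lemma Psi_quot_left_of_min:
  assumes "0 \<le> \<xi>" "x \<le> 2 * \<xi>/3" "y \<le> 2 * \<xi>/3"
  shows "2 * \<xi> * \<bar>x - y\<bar> \<le> Psi_quot \<xi> x y"
proof -
  define a b where "a = 2 * \<xi>/3 - x" and "b = 2 * \<xi>/3 - y"
  have "0 \<le> a" "0 \<le> b"
    using assms by (auto simp: a_def b_def)
  then have "0 \<le> 4 * (\<xi> * b) + a * a + a * b + b * b" "0 \<le> 4 * (\<xi> * a) + a * a + a * b + b * b"
    using assms(1) by simp_all
  moreover have "Psi_quot \<xi> x y - 2 * \<xi> * (y - x) = 4 * (\<xi> * b) + a * a + a * b + b * b"
    "Psi_quot \<xi> x y - 2 * \<xi> * (x - y) = 4 * (\<xi> * a) + a * a + a * b + b * b"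
    unfolding Psi_quot_def power2_eq_square a_def b_def by (simp_all add: field_simps)
  ultimately show ?thesis
    by (auto simp: abs_if)
qed

lemma Psi_quot_right_of_min:
  assumes "0 \<le> \<xi>" "2 * \<xi>/3 \<le> x" "x \<le> 5 * \<xi>/6" "2 * \<xi>/3 \<le> y" "y \<le> 5 * \<xi>/6"
  shows "5/3 * \<xi> * \<bar>x - y\<bar> \<le> - Psi_quot \<xi> x y"
proof -
  define s t u v where "s = x - 2 * \<xi>/3" and "t = y - 2 * \<xi>/3" and "u = 5 * \<xi>/6 - x" and "v = 5 * \<xi>/6 - y"
  have "0 \<le> s" "0 \<le> t" "0 \<le> u" "0 \<le> v"
    using assms by (auto simp: s_def t_def u_def v_def)
  then have "0 \<le> 10/3 * (\<xi> * s) + 1/6 * (\<xi> * t) + s * u + s * v + t * v" "0 \<le> 10/3 * (\<xi> * t) + 1/6 * (\<xi> * s) + t * v + t * u + s * u"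
    using assms(1) by simp_all
  moreover have "- Psi_quot \<xi> x y - 5/3 * \<xi> * (y - x) = 10/3 * (\<xi> * s) + 1/6 * (\<xi> * t) + s * u + s * v + t * v"
    "- Psi_quot \<xi> x y - 5/3 * \<xi> * (x - y) = 10/3 * (\<xi> * t) + 1/6 * (\<xi> * s) + t * v + t * u + s * u"
    unfolding Psi_quot_def power2_eq_square s_def t_def u_def v_def by (simp_all add: field_simps)
  ultimately show ?thesis
    by (auto simp: abs_if)
qed

lemma Psi_quot_left_of_max:
  assumes "0 \<le> \<xi>" "3 * \<xi>/2 \<le> x" "x \<le> 2 * \<xi>" "3 * \<xi>/2 \<le> y" "y \<le> 2 * \<xi>"
  shows "\<xi> * \<bar>x - y\<bar> \<le> - Psi_quot \<xi> x y"
proof -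
  define a b u v where "a = 2 * \<xi> - x" and "b = 2 * \<xi> - y" and "u = x - 3 * \<xi>/2" and "v = y - 3 * \<xi>/2"
  have "0 \<le> a" "0 \<le> b" "0 \<le> u" "0 \<le> v"
    using assms by (auto simp: a_def b_def u_def v_def)
  then have "0 \<le> 2 * (\<xi> * a) + 1/2 * (\<xi> * b) + a * u + a * v + b * v" "0 \<le> 2 * (\<xi> * b) + 1/2 * (\<xi> * a) + b * v + b * u + a * u"
    using assms(1) by simp_all
  moreover have "- Psi_quot \<xi> x y - \<xi> * (x - y) = 2 * (\<xi> * a) + 1/2 * (\<xi> * b) + a * u + a * v + b * v"
    "- Psi_quot \<xi> x y - \<xi> * (y - x) = 2 * (\<xi> * b) + 1/2 * (\<xi> * a) + b * v + b * u + a * u"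
    unfolding Psi_quot_def power2_eq_square a_def b_def u_def v_def by (simp_all add: field_simps)
  ultimately show ?thesis
    by (auto simp: abs_if)
qed

lemma Psi_quot_right_of_max:
  assumes "0 \<le> \<xi>" "2 * \<xi> \<le> x" "2 * \<xi> \<le> y"
  shows "2 * \<xi> * \<bar>x - y\<bar> \<le> Psi_quot \<xi> x y"
proof -
  define s t where "s = x - 2 * \<xi>" and "t = y - 2 * \<xi>"
  have "0 \<le> s" "0 \<le> t"
    using assms by (auto simp: s_def t_def)
  then have "0 \<le> 4 * (\<xi> * s) + s * s + s * t + t * t" "0 \<le> 4 * (\<xi> * t) + s * s + s * t + t * t"
    using assms(1) by simp_all
  moreover have "Psi_quot \<xi> x y - 2 * \<xi> * (y - x) = 4 * (\<xi> * s) + s * s + s * t + t * t"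
    "Psi_quot \<xi> x y - 2 * \<xi> * (x - y) = 4 * (\<xi> * t) + s * s + s * t + t * t"
    unfolding Psi_quot_def power2_eq_square s_def t_def by (simp_all add: field_simps)
  ultimately show ?thesis
    by (auto simp: abs_if)
qed

definition critical_intervals :: "real \<Rightarrow> real set set" where
  "critical_intervals \<xi> = {{\<xi>/2..2*\<xi>/3}, {2*\<xi>/3..5*\<xi>/6}, {3*\<xi>/2..2*\<xi>}, {2*\<xi>..3*\<xi>}}"

lemma abs_Psi_diff_ge_critical:
  assumes "0 \<le> \<xi>" "I \<in> critical_intervals \<xi>" "x \<in> I" "y \<in> I"
  shows "3/4 * \<xi> * (x - y)\<^sup>2 \<le> \<bar>Psi \<xi> x - Psi \<xi> y\<bar>"
proof -
  have "\<xi> * \<bar>x - y\<bar> \<le> \<bar>Psi_quot \<xi> x y\<bar>"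
    using assms(2) unfolding critical_intervals_def
  proof (elim insertE emptyE)
    assume "I = {\<xi>/2..2*\<xi>/3}"
    then show ?thesis
      using Psi_quot_left_of_min[of \<xi> x y] assms by auto
  next
    assume "I = {2*\<xi>/3..5*\<xi>/6}"
    then show ?thesis
      using Psi_quot_right_of_min[of \<xi> x y] assms by auto
  next
    assume "I = {3*\<xi>/2..2*\<xi>}"
    then show ?thesis
      using Psi_quot_left_of_max[of \<xi> x y] assms by auto
  next
    assume "I = {2*\<xi>..3*\<xi>}"
    then show ?thesis
      using Psi_quot_right_of_max[of \<xi> x y] assms by auto
  qed
  then have "3/4 * \<bar>x - y\<bar> * (\<xi> * \<bar>x - y\<bar>) \<le> 3/4 * \<bar>x - y\<bar> * \<bar>Psi_quot \<xi> x y\<bar>"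
    by (intro mult_left_mono) auto
  then show ?thesis
    by (simp add: abs_Psi_diff power2_eq_square abs_mult_self algebra_simps)
qed

definition level_band :: "real \<Rightarrow> real \<Rightarrow> real \<Rightarrow> real \<Rightarrow> real set" where
  "level_band \<xi> \<alpha> M R = {\<eta>. R \<le> \<bar>\<xi>\<bar> + \<bar>\<eta>\<bar> \<and> \<bar>Psi \<xi> \<eta> - \<alpha>\<bar> < M}"

lemma level_band_Psi_diff:
  "x \<in> level_band \<xi> \<alpha> M R \<Longrightarrow> y \<in> level_band \<xi> \<alpha> M R \<Longrightarrow> \<bar>Psi \<xi> x - Psi \<xi> y\<bar> < 2 * M"
  unfolding level_band_def by auto

lemma level_band_threshold: "x \<in> level_band \<xi> \<alpha> M R \<Longrightarrow> R \<le> \<bar>\<xi>\<bar> + \<bar>x\<bar>"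
  unfolding level_band_def by auto

lemma uminus_level_band: "uminus ` level_band (-\<xi>) (-\<alpha>) M R = level_band \<xi> \<alpha> M R"
proof -
  have "\<bar>Psi (-\<xi>) (-x) - (-\<alpha>)\<bar> = \<bar>Psi \<xi> x - \<alpha>\<bar>" for x
    by (simp add: Psi_minus abs_minus_commute)
  then have "-x \<in> level_band (-\<xi>) (-\<alpha>) M R \<longleftrightarrow> x \<in> level_band \<xi> \<alpha> M R" for x
    by (simp add: level_band_def)
  moreover have "x \<in> uminus ` level_band (-\<xi>) (-\<alpha>) M R \<longleftrightarrow> -x \<in> level_band (-\<xi>) (-\<alpha>) M R" for x
    by (auto simp: image_iff intro: bexI[of _ "-x"])
  ultimately show ?thesis
    by blast
qed

lemma real_line_cover:
  assumes "0 \<le> \<xi>"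
  shows "\<eta> \<in> {-\<xi>/2..\<xi>/2} \<union> {..-\<xi>/2} \<union> {3*\<xi>..} \<union> \<Union>(critical_intervals \<xi>) \<union> {5*\<xi>/6..3*\<xi>/2}"
proof -
  consider "\<eta> \<le> \<xi>/2" | "\<xi>/2 \<le> \<eta> \<and> \<eta> \<le> 2*\<xi>/3" | "2*\<xi>/3 \<le> \<eta> \<and> \<eta> \<le> 5*\<xi>/6"
    | "5*\<xi>/6 \<le> \<eta> \<and> \<eta> \<le> 3*\<xi>/2" | "3*\<xi>/2 \<le> \<eta> \<and> \<eta> \<le> 2*\<xi>" | "2*\<xi> \<le> \<eta> \<and> \<eta> \<le> 3*\<xi>"
    | "3*\<xi> \<le> \<eta>"
    by linarith
  then show ?thesis
    by cases (auto simp: critical_intervals_def)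
qed

section \<open>The weight\<close>

lemma jb_pos: "0 < jb x"
  by (simp add: jb_def add_pos_nonneg)

lemma one_le_jb: "1 \<le> jb x"
  by (simp add: jb_def)

lemma abs_le_jb: "\<bar>x\<bar> \<le> jb x"
  unfolding jb_def by (rule real_le_rsqrt) simp

lemma jb_minus: "jb (-x) = jb x"
  by (simp add: jb_def)

lemma jb_abs: "jb \<bar>x\<bar> = jb x"
  by (simp add: jb_def)

lemma jb_mono: "\<bar>x\<bar> \<le> \<bar>y\<bar> \<Longrightarrow> jb x \<le> jb y"
  unfolding jb_def by (simp add: abs_le_square_iff)

lemma jb_scale_le:
  assumes "1 \<le> c"
  shows "jb (c * x) \<le> c * jb x"
proof -
  have "1 + (c * x)\<^sup>2 \<le> (c * jb x)\<^sup>2"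
    using assms by (simp add: jb_def power_mult_distrib algebra_simps)
  then show ?thesis
    unfolding jb_def using assms jb_pos[of x] by (intro real_le_lsqrt) auto
qed

lemma jb_scale_ge:
  assumes "0 < c" "c \<le> 1"
  shows "c * jb x \<le> jb (c * x)"
proof -
  have "c\<^sup>2 \<le> 1"
    using assms by (simp add: power_le_one)
  then have "(c * jb x)\<^sup>2 \<le> 1 + (c * x)\<^sup>2"
    using assms by (simp add: jb_def power_mult_distrib algebra_simps)
  then show ?thesis
    unfolding jb_def by (rule real_le_rsqrt)
qed

lemma jb_le_double:
  assumes "1 \<le> x"
  shows "jb x \<le> 2 * x"
proof -
  have "1 * 1 \<le> x * x"
    using assms by (intro mult_mono) auto
  then show ?thesis
    unfolding jb_def using assms by (intro real_le_lsqrt) (auto simp: power2_eq_square)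
qed

lemma jb_powr_diff: "jb x powr a * jb x powr (-b) = jb x powr (a - b)"
  by (simp add: powr_add[symmetric])

lemma jb_powr_le_powr:
  assumes "0 < x" "x \<le> jb y" "e \<le> 0"
  shows "jb y powr e \<le> x powr e"
  by (rule powr_mono2') (use assms in auto)

lemma powr_neg_le_scaled:
  fixes c J Z \<nu> :: real
  assumes "0 < c" "c \<le> 1" "0 < J" "c * J \<le> Z" "0 \<le> \<nu>" "\<nu> \<le> 1"
  shows "Z powr (-\<nu>) \<le> (1/c) * J powr (-\<nu>)"
proof -
  have "Z powr (-\<nu>) \<le> (c * J) powr (-\<nu>)"
    by (rule powr_mono2') (use assms in auto)
  also have "\<dots> = c powr (-\<nu>) * J powr (-\<nu>)"
    using assms by (simp add: powr_mult)
  also have "\<dots> \<le> (1/c) * J powr (-\<nu>)"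
  proof -
    have "c powr (-\<nu>) \<le> c powr (-1)"
      using assms by (intro powr_mono') auto
    then show ?thesis
      using assms by (intro mult_right_mono) (auto simp: powr_minus_divide)
  qed
  finally show ?thesis .
qed

lemma powr_le_scaled:
  fixes c J Z \<mu> :: real
  assumes "1 \<le> c" "0 < J" "0 \<le> Z" "Z \<le> c * J" "0 \<le> \<mu>" "\<mu> \<le> 1"
  shows "Z powr \<mu> \<le> c * J powr \<mu>"
proof -
  have "Z powr \<mu> \<le> (c * J) powr \<mu>"
    by (rule powr_mono2) (use assms in auto)
  also have "\<dots> = c powr \<mu> * J powr \<mu>"
    using assms by (simp add: powr_mult)
  also have "\<dots> \<le> c powr 1 * J powr \<mu>"
    using assms by (intro mult_right_mono powr_mono) auto
  finally show ?thesis
    using assms by simp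
qed

lemma inverse_sqrt_eq_powr: "0 \<le> x \<Longrightarrow> 1 / sqrt x = x powr (- (1/2))"
  by (cases "x = 0") (simp_all add: powr_minus_divide powr_half_sqrt)

lemma inverse_sqrt_le_of_half_le:
  assumes "0 < \<xi>" "\<xi>/2 \<le> \<eta>"
  shows "1 / sqrt \<bar>\<eta>\<bar> \<le> sqrt 2 / sqrt \<xi>"
proof -
  have "1 / sqrt \<bar>\<eta>\<bar> \<le> 1 / sqrt (\<xi>/2)"
    using assms by (intro divide_left_mono) auto
  then show ?thesis
    by (simp add: real_sqrt_divide)
qed

definition weight :: "real \<Rightarrow> real \<Rightarrow> real \<Rightarrow> real \<Rightarrow> real" where
  "weight \<mu> \<nu> \<xi> \<eta> = max \<bar>\<xi>\<bar> \<bar>\<eta>\<bar> * jb \<xi> powr \<mu> / (sqrt \<bar>\<eta>\<bar> * jb (\<xi> - \<eta>) powr \<nu>)"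

lemma weight_minus: "weight \<mu> \<nu> (-\<xi>) (-\<eta>) = weight \<mu> \<nu> \<xi> \<eta>"
  unfolding weight_def by (simp add: jb_minus[of "\<xi> - \<eta>", symmetric] jb_minus)

lemma weight_le_product:
  assumes "max \<bar>\<xi>\<bar> \<bar>\<eta>\<bar> \<le> A" "jb \<xi> powr \<mu> \<le> P" "jb (\<xi> - \<eta>) powr (-\<nu>) \<le> N" "1 / sqrt \<bar>\<eta>\<bar> \<le> S"
  shows "weight \<mu> \<nu> \<xi> \<eta> \<le> A * P * N * S"
proof -
  have pos: "0 < jb \<xi> powr \<mu>" "0 < jb (\<xi> - \<eta>) powr (-\<nu>)"
    using jb_pos[of \<xi>] jb_pos[of "\<xi> - \<eta>"] by auto
  have "0 \<le> A"
    using assms(1) by (rule order_trans[rotated]) simp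
  have "0 \<le> P" "0 \<le> N"
    using assms(2,3) pos by linarith+
  have "weight \<mu> \<nu> \<xi> \<eta> = max \<bar>\<xi>\<bar> \<bar>\<eta>\<bar> * jb \<xi> powr \<mu> * jb (\<xi> - \<eta>) powr (-\<nu>) * (1 / sqrt \<bar>\<eta>\<bar>)"
    by (simp add: weight_def powr_minus divide_inverse)
  also have "\<dots> \<le> A * P * N * S"
    using assms pos \<open>0 \<le> A\<close> \<open>0 \<le> P\<close> \<open>0 \<le> N\<close> by (intro mult_mono mult_nonneg_nonneg) auto
  finally show ?thesis .
qed

lemma threshold_powr_le:
  fixes \<tau> \<mu> \<nu> :: real
  assumes "0 < \<tau>" "\<mu> \<le> \<nu>" "\<nu> \<le> \<mu> + 1"
  shows "(\<tau> powr (-1/3) / 10) powr (\<mu> - \<nu>) \<le> 10 * \<tau> powr ((\<nu> - \<mu>) / 3)"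
proof -
  have "(\<tau> powr (-1/3)) powr (\<mu> - \<nu>) = \<tau> powr (-1/3 * (\<mu> - \<nu>))"
    by (simp only: powr_powr)
  also have "\<dots> = \<tau> powr ((\<nu> - \<mu>) / 3)"
    by (rule arg_cong[where f = "\<lambda>e. \<tau> powr e"]) (simp add: field_simps)
  finally have "(\<tau> powr (-1/3) / 10) powr (\<mu> - \<nu>) = \<tau> powr ((\<nu> - \<mu>) / 3) / 10 powr (\<mu> - \<nu>)"
    by (simp add: powr_divide)
  also have "\<dots> \<le> \<tau> powr ((\<nu> - \<mu>) / 3) / 10 powr (-1)"
    using assms by (intro divide_left_mono powr_mono) auto
  finally show ?thesis
    by (simp add: powr_minus_divide)
qed

section \<open>Bounds on the pieces of the level band\<close>

context
  fixes \<mu> \<nu> :: real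
  assumes exponents: "0 < \<mu>" "\<mu> < \<nu>" "\<nu> < 1/2"
begin

lemma weight_le_near_origin:
  assumes "0 < \<xi>" "\<bar>\<eta>\<bar> \<le> \<xi>/2"
  shows "weight \<mu> \<nu> \<xi> \<eta> \<le> 2 * \<xi> * \<xi> powr (\<mu> - \<nu>) * \<bar>\<eta>\<bar> powr (- (1/2))"
proof -
  have A: "max \<bar>\<xi>\<bar> \<bar>\<eta>\<bar> \<le> \<xi>"
    using assms by auto
  have "1/2 * jb \<xi> \<le> jb (1/2 * \<xi>)"
    by (rule jb_scale_ge) auto
  also have "\<dots> \<le> jb (\<xi> - \<eta>)"
    using assms by (intro jb_mono) auto
  finally have "jb (\<xi> - \<eta>) powr (-\<nu>) \<le> (1/(1/2)) * jb \<xi> powr (-\<nu>)"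
    using exponents jb_pos by (intro powr_neg_le_scaled) auto
  then have N: "jb (\<xi> - \<eta>) powr (-\<nu>) \<le> 2 * jb \<xi> powr (-\<nu>)"
    by simp
  have S: "1 / sqrt \<bar>\<eta>\<bar> \<le> \<bar>\<eta>\<bar> powr (- (1/2))"
    by (simp add: inverse_sqrt_eq_powr)
  have "weight \<mu> \<nu> \<xi> \<eta> \<le> \<xi> * jb \<xi> powr \<mu> * (2 * jb \<xi> powr (-\<nu>)) * \<bar>\<eta>\<bar> powr (- (1/2))"
    by (rule weight_le_product[OF A order_refl N S])
  also have "\<dots> = 2 * \<xi> * jb \<xi> powr (\<mu> - \<nu>) * \<bar>\<eta>\<bar> powr (- (1/2))"
    by (simp add: jb_powr_diff[symmetric] mult_ac)
  also have "\<dots> \<le> 2 * \<xi> * \<xi> powr (\<mu> - \<nu>) * \<bar>\<eta>\<bar> powr (- (1/2))"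
    using jb_powr_le_powr[of \<xi> \<xi> "\<mu> - \<nu>"] assms abs_le_jb[of \<xi>] exponents
    by (intro mult_right_mono mult_left_mono) auto
  finally show ?thesis .
qed

lemma weight_le_negative:
  assumes "0 \<le> \<xi>" "\<eta> < 0" "\<xi>/2 \<le> \<bar>\<eta>\<bar>"
  shows "weight \<mu> \<nu> \<xi> \<eta> \<le> 4 * \<bar>\<eta>\<bar> powr (\<mu> - \<nu>) * sqrt \<bar>\<eta>\<bar>"
proof -
  have A: "max \<bar>\<xi>\<bar> \<bar>\<eta>\<bar> \<le> 2 * \<bar>\<eta>\<bar>"
    using assms by auto
  have "jb \<xi> \<le> jb (2 * \<bar>\<eta>\<bar>)"
    using assms by (intro jb_mono) auto
  also have "\<dots> \<le> 2 * jb \<bar>\<eta>\<bar>"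
    by (rule jb_scale_le) auto
  finally have P: "jb \<xi> powr \<mu> \<le> 2 * jb \<eta> powr \<mu>"
    using exponents jb_pos[of \<xi>] jb_pos[of \<eta>] by (intro powr_le_scaled) (auto simp: jb_abs)
  have "jb (\<xi> - \<eta>) powr (-\<nu>) \<le> (1/1) * jb \<eta> powr (-\<nu>)"
    using exponents jb_pos assms by (intro powr_neg_le_scaled) (auto intro!: jb_mono)
  then have N: "jb (\<xi> - \<eta>) powr (-\<nu>) \<le> jb \<eta> powr (-\<nu>)"
    by simp
  have "weight \<mu> \<nu> \<xi> \<eta> \<le> (2 * \<bar>\<eta>\<bar>) * (2 * jb \<eta> powr \<mu>) * jb \<eta> powr (-\<nu>) * (1 / sqrt \<bar>\<eta>\<bar>)"
    by (rule weight_le_product[OF A P N order_refl])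
  also have "\<dots> = 4 * jb \<eta> powr (\<mu> - \<nu>) * (\<bar>\<eta>\<bar> / sqrt \<bar>\<eta>\<bar>)"
    by (simp add: jb_powr_diff[symmetric] mult_ac)
  also have "\<dots> = 4 * jb \<eta> powr (\<mu> - \<nu>) * sqrt \<bar>\<eta>\<bar>"
    using assms by (subst real_div_sqrt) auto
  also have "\<dots> \<le> 4 * \<bar>\<eta>\<bar> powr (\<mu> - \<nu>) * sqrt \<bar>\<eta>\<bar>"
    using jb_powr_le_powr[of "\<bar>\<eta>\<bar>" \<eta> "\<mu> - \<nu>"] assms abs_le_jb[of \<eta>] exponents
    by (intro mult_right_mono mult_left_mono) auto
  finally show ?thesis .
qed

lemma weight_le_far:
  assumes "0 \<le> \<xi>" "0 < \<eta>" "3 * \<xi> \<le> \<eta>"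
  shows "weight \<mu> \<nu> \<xi> \<eta> \<le> 4 * \<bar>\<eta>\<bar> powr (\<mu> - \<nu>) * sqrt \<bar>\<eta>\<bar>"
proof -
  have A: "max \<bar>\<xi>\<bar> \<bar>\<eta>\<bar> \<le> \<bar>\<eta>\<bar>"
    using assms by auto
  have "jb \<xi> powr \<mu> \<le> 1 * jb \<eta> powr \<mu>"
    using exponents jb_pos[of \<xi>] jb_pos[of \<eta>] assms by (intro powr_le_scaled) (auto intro!: jb_mono)
  then have P: "jb \<xi> powr \<mu> \<le> jb \<eta> powr \<mu>"
    by simp
  have "2/3 * jb \<eta> \<le> jb (2/3 * \<eta>)"
    by (rule jb_scale_ge) auto
  also have "\<dots> \<le> jb (\<xi> - \<eta>)"
    using assms by (intro jb_mono) auto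
  finally have "jb (\<xi> - \<eta>) powr (-\<nu>) \<le> (1/(2/3)) * jb \<eta> powr (-\<nu>)"
    using exponents jb_pos by (intro powr_neg_le_scaled) auto
  then have N: "jb (\<xi> - \<eta>) powr (-\<nu>) \<le> 3/2 * jb \<eta> powr (-\<nu>)"
    by simp
  have "weight \<mu> \<nu> \<xi> \<eta> \<le> \<bar>\<eta>\<bar> * jb \<eta> powr \<mu> * (3/2 * jb \<eta> powr (-\<nu>)) * (1 / sqrt \<bar>\<eta>\<bar>)"
    by (rule weight_le_product[OF A P N order_refl])
  also have "\<dots> = 3/2 * jb \<eta> powr (\<mu> - \<nu>) * (\<bar>\<eta>\<bar> / sqrt \<bar>\<eta>\<bar>)"
    by (simp add: jb_powr_diff[symmetric] mult_ac)
  also have "\<dots> = 3/2 * jb \<eta> powr (\<mu> - \<nu>) * sqrt \<bar>\<eta>\<bar>"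
    using assms by (subst real_div_sqrt) auto
  also have "\<dots> \<le> 4 * \<bar>\<eta>\<bar> powr (\<mu> - \<nu>) * sqrt \<bar>\<eta>\<bar>"
    using jb_powr_le_powr[of "\<bar>\<eta>\<bar>" \<eta> "\<mu> - \<nu>"] assms abs_le_jb[of \<eta>] exponents
    by (intro mult_right_mono mult_mono) auto
  finally show ?thesis .
qed

lemma weight_le_critical:
  assumes "0 < \<xi>" "\<xi>/2 \<le> \<eta>" "\<eta> \<le> 3 * \<xi>" "\<xi>/6 \<le> \<bar>\<xi> - \<eta>\<bar>"
  shows "weight \<mu> \<nu> \<xi> \<eta> \<le> 26 * sqrt \<xi> * \<xi> powr (\<mu> - \<nu>)"
proof -
  have A: "max \<bar>\<xi>\<bar> \<bar>\<eta>\<bar> \<le> 3 * \<xi>"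
    using assms by auto
  have "1/6 * jb \<xi> \<le> jb (1/6 * \<xi>)"
    by (rule jb_scale_ge) auto
  also have "\<dots> \<le> jb (\<xi> - \<eta>)"
    using assms by (intro jb_mono) auto
  finally have "jb (\<xi> - \<eta>) powr (-\<nu>) \<le> (1/(1/6)) * jb \<xi> powr (-\<nu>)"
    using exponents jb_pos by (intro powr_neg_le_scaled) auto
  then have N: "jb (\<xi> - \<eta>) powr (-\<nu>) \<le> 6 * jb \<xi> powr (-\<nu>)"
    by simp
  have S: "1 / sqrt \<bar>\<eta>\<bar> \<le> sqrt 2 / sqrt \<xi>"
    using assms by (intro inverse_sqrt_le_of_half_le) auto
  have "weight \<mu> \<nu> \<xi> \<eta> \<le> (3 * \<xi>) * jb \<xi> powr \<mu> * (6 * jb \<xi> powr (-\<nu>)) * (sqrt 2 / sqrt \<xi>)"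
    by (rule weight_le_product[OF A order_refl N S])
  also have "\<dots> = 18 * sqrt 2 * jb \<xi> powr (\<mu> - \<nu>) * (\<xi> / sqrt \<xi>)"
    by (simp add: jb_powr_diff[symmetric] mult_ac)
  also have "\<dots> = 18 * sqrt 2 * jb \<xi> powr (\<mu> - \<nu>) * sqrt \<xi>"
    using assms by (subst real_div_sqrt) auto
  also have "\<dots> \<le> 18 * (13/9) * \<xi> powr (\<mu> - \<nu>) * sqrt \<xi>"
  proof (intro mult_right_mono mult_mono)
    show "sqrt 2 \<le> 13/9"
      by (rule real_le_lsqrt) (auto simp: power2_eq_square)
    show "jb \<xi> powr (\<mu> - \<nu>) \<le> \<xi> powr (\<mu> - \<nu>)"
      using assms abs_le_jb[of \<xi>] exponents by (intro jb_powr_le_powr) auto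
  qed (use assms in auto)
  finally show ?thesis
    by (simp add: algebra_simps)
qed

lemma weight_le_near_diagonal:
  assumes "1 \<le> \<xi>" "5 * \<xi>/6 \<le> \<eta>" "\<eta> \<le> 3 * \<xi>/2" "\<eta> \<noteq> \<xi>"
  shows "weight \<mu> \<nu> \<xi> \<eta> \<le> 6 * sqrt \<xi> * \<xi> powr \<mu> * \<bar>\<eta> - \<xi>\<bar> powr (-\<nu>)"
proof -
  have A: "max \<bar>\<xi>\<bar> \<bar>\<eta>\<bar> \<le> 2 * \<xi>"
    using assms by auto
  have P: "jb \<xi> powr \<mu> \<le> 2 * \<xi> powr \<mu>"
    using exponents assms jb_le_double[of \<xi>] jb_pos[of \<xi>] by (intro powr_le_scaled) auto
  have N: "jb (\<xi> - \<eta>) powr (-\<nu>) \<le> \<bar>\<eta> - \<xi>\<bar> powr (-\<nu>)"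
    using exponents assms(4) abs_le_jb[of "\<xi> - \<eta>"] by (intro powr_mono2') (auto simp: abs_minus_commute)
  have S: "1 / sqrt \<bar>\<eta>\<bar> \<le> sqrt 2 / sqrt \<xi>"
    using assms by (intro inverse_sqrt_le_of_half_le) auto
  have "weight \<mu> \<nu> \<xi> \<eta> \<le> (2 * \<xi>) * (2 * \<xi> powr \<mu>) * \<bar>\<eta> - \<xi>\<bar> powr (-\<nu>) * (sqrt 2 / sqrt \<xi>)"
    by (rule weight_le_product[OF A P N S])
  also have "\<dots> = 4 * sqrt 2 * (\<xi> / sqrt \<xi> * \<xi> powr \<mu> * \<bar>\<eta> - \<xi>\<bar> powr (-\<nu>))"
    by (simp add: algebra_simps)
  also have "\<dots> = 4 * sqrt 2 * (sqrt \<xi> * \<xi> powr \<mu> * \<bar>\<eta> - \<xi>\<bar> powr (-\<nu>))"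
    using assms by (subst real_div_sqrt) auto
  also have "\<dots> \<le> 6 * (sqrt \<xi> * \<xi> powr \<mu> * \<bar>\<eta> - \<xi>\<bar> powr (-\<nu>))"
  proof (rule mult_right_mono)
    have "sqrt 2 \<le> 3/2"
      by (rule real_le_lsqrt) (auto simp: power2_eq_square)
    then show "4 * sqrt 2 \<le> 6"
      by simp
  qed (use assms in simp)
  finally show ?thesis
    by (simp add: algebra_simps)
qed

lemma weight_le_near_diagonal_small:
  assumes "0 < \<xi>" "\<xi> \<le> 1" "\<xi>/2 \<le> \<eta>" "\<eta> \<le> 3 * \<xi>"
  shows "weight \<mu> \<nu> \<xi> \<eta> \<le> 9"
proof -
  have A: "max \<bar>\<xi>\<bar> \<bar>\<eta>\<bar> \<le> 3 * \<xi>"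
    using assms by auto
  have "jb \<xi> \<le> jb 1"
    using assms by (intro jb_mono) auto
  also have "\<dots> \<le> 2"
    unfolding jb_def by (rule real_le_lsqrt) auto
  finally have "jb \<xi> powr \<mu> \<le> 2 * 1 powr \<mu>"
    using exponents jb_pos[of \<xi>] by (intro powr_le_scaled) auto
  then have P: "jb \<xi> powr \<mu> \<le> 2"
    by simp
  have N: "jb (\<xi> - \<eta>) powr (-\<nu>) \<le> 1"
    using exponents one_le_jb[of "\<xi> - \<eta>"] powr_mono2'[of "-\<nu>" 1 "jb (\<xi> - \<eta>)"] by simp
  have S: "1 / sqrt \<bar>\<eta>\<bar> \<le> sqrt 2 / sqrt \<xi>"
    using assms by (intro inverse_sqrt_le_of_half_le) auto
  have "weight \<mu> \<nu> \<xi> \<eta> \<le> (3 * \<xi>) * 2 * 1 * (sqrt 2 / sqrt \<xi>)"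
    by (rule weight_le_product[OF A P N S])
  also have "\<dots> = 6 * sqrt 2 * (\<xi> / sqrt \<xi>)"
    by simp
  also have "\<dots> = 6 * sqrt 2 * sqrt \<xi>"
    using assms by (subst real_div_sqrt) auto
  also have "\<dots> \<le> 6 * (3/2) * 1"
    using assms by (intro mult_mono real_le_lsqrt) (auto simp: power2_eq_square)
  finally show ?thesis
    by simp
qed

lemma powr_decay_le_threshold:
  assumes "0 < R" "0 < c" "c \<le> 1" "c * R \<le> x"
  shows "x powr (\<mu> - \<nu>) \<le> (1/c) * R powr (\<mu> - \<nu>)"
  using powr_neg_le_scaled[of c R x "\<nu> - \<mu>"] assms exponents by simp

lemma upper_integral_le_band_near_origin:
  assumes "0 \<le> \<xi>" "1 \<le> M" "0 < R"
  shows "upper_integral_le (\<lambda>\<eta>. ennreal (weight \<mu> \<nu> \<xi> \<eta>)) (level_band \<xi> \<alpha> M R \<inter> {-\<xi>/2..\<xi>/2})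
    (ennreal (36 * (sqrt M * R powr (\<mu> - \<nu>))))"
proof (rule upper_integral_le_from_point)
  let ?T = "level_band \<xi> \<alpha> M R \<inter> {-\<xi>/2..\<xi>/2}"
  fix x0 assume x0: "x0 \<in> ?T"
  have R: "2/3 * R \<le> \<xi>"
    using level_band_threshold[of x0 \<xi> \<alpha> M R] x0 assms(1) by (auto simp: abs_if split: if_splits)
  then have "0 < \<xi>"
    using assms by linarith
  define d where "d = 4 * M / \<xi>\<^sup>2"
  have "0 < d"
    using \<open>0 < \<xi>\<close> assms by (simp add: d_def)
  have "?T \<subseteq> cball x0 d"
  proof
    fix y assume y: "y \<in> ?T"
    have "3/4 * \<xi>\<^sup>2 \<le> Psi_quot \<xi> x0 y"
      using x0 y assms(1) by (intro Psi_quot_ge_near_origin) (auto simp: abs_le_iff)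
    then have "3/4 * \<bar>x0 - y\<bar> * (3/4 * \<xi>\<^sup>2) \<le> \<bar>Psi \<xi> x0 - Psi \<xi> y\<bar>"
      unfolding abs_Psi_diff by (intro mult_left_mono) auto
    also have "\<dots> < 2 * M"
      using level_band_Psi_diff x0 y by blast
    finally have "\<bar>x0 - y\<bar> * \<xi>\<^sup>2 \<le> 4 * M"
      using assms by simp
    then show "y \<in> cball x0 d"
      using \<open>0 < \<xi>\<close> by (simp add: d_def dist_real_def le_divide_eq)
  qed
  then have "upper_integral_le (\<lambda>\<eta>. ennreal (weight \<mu> \<nu> \<xi> \<eta>)) ?T
      (ennreal (2 * \<xi> * \<xi> powr (\<mu> - \<nu>) * (2 / (1 - 1/2) + 2) * d powr (1 - 1/2)))"
    using weight_le_near_origin[OF \<open>0 < \<xi>\<close>] \<open>0 < \<xi>\<close> \<open>0 < d\<close>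
    by (intro upper_integral_le_singular_on_ball[where p = 0]) (auto intro: ennreal_leI)
  moreover have "2 * \<xi> * \<xi> powr (\<mu> - \<nu>) * (2 / (1 - 1/2) + 2) * d powr (1 - 1/2)
      \<le> 36 * (sqrt M * R powr (\<mu> - \<nu>))"
  proof -
    have "d powr (1 - 1/2) = 2 * sqrt M / \<xi>"
      using \<open>0 < \<xi>\<close> \<open>0 < d\<close> assms by (simp add: powr_half_sqrt d_def real_sqrt_divide real_sqrt_mult)
    then have "2 * \<xi> * \<xi> powr (\<mu> - \<nu>) * (2 / (1 - 1/2) + 2) * d powr (1 - 1/2)
        = 24 * sqrt M * \<xi> powr (\<mu> - \<nu>)"
      using \<open>0 < \<xi>\<close> by simp
    also have "\<dots> \<le> 24 * sqrt M * (3/2 * R powr (\<mu> - \<nu>))"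
      using powr_decay_le_threshold[of R "2/3" \<xi>] R assms by (intro mult_left_mono) auto
    finally show ?thesis
      by simp
  qed
  ultimately show "upper_integral_le (\<lambda>\<eta>. ennreal (weight \<mu> \<nu> \<xi> \<eta>)) ?T
      (ennreal (36 * (sqrt M * R powr (\<mu> - \<nu>))))"
    by (elim upper_integral_le_bound_mono) (rule ennreal_leI)
qed

lemma upper_integral_le_band_cubic:
  assumes "0 \<le> \<xi>" "1 \<le> M" "0 < R" "T \<subseteq> level_band \<xi> \<alpha> M R"
    and quot: "\<And>x y. x \<in> T \<Longrightarrow> y \<in> T \<Longrightarrow> max (x\<^sup>2) (y\<^sup>2) \<le> 3 * \<bar>Psi_quot \<xi> x y\<bar>"
    and large: "\<And>x. x \<in> T \<Longrightarrow> \<xi> \<le> 2 * \<bar>x\<bar>"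
    and weight: "\<And>x. x \<in> T \<Longrightarrow> weight \<mu> \<nu> \<xi> x \<le> 4 * \<bar>x\<bar> powr (\<mu> - \<nu>) * sqrt \<bar>x\<bar>"
  shows "upper_integral_le (\<lambda>\<eta>. ennreal (weight \<mu> \<nu> \<xi> \<eta>)) T (ennreal (252 * (sqrt M * R powr (\<mu> - \<nu>))))"
proof -
  have "upper_integral_le (\<lambda>\<eta>. ennreal (weight \<mu> \<nu> \<xi> \<eta>)) T
      (ennreal (7 * (12 * R powr (\<mu> - \<nu>)) * sqrt (8 * M)))"
  proof (rule upper_integral_le_sqrt_on_cubic_set)
    show "\<bar>x - y\<bar> * max (x\<^sup>2) (y\<^sup>2) \<le> 8 * M" if "x \<in> T" "y \<in> T" for x y
    proof -
      have "\<bar>x - y\<bar> * max (x\<^sup>2) (y\<^sup>2) \<le> \<bar>x - y\<bar> * (3 * \<bar>Psi_quot \<xi> x y\<bar>)"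
        using quot that by (intro mult_left_mono) auto
      also have "\<dots> = 4 * \<bar>Psi \<xi> x - Psi \<xi> y\<bar>"
        by (simp add: abs_Psi_diff)
      also have "\<dots> \<le> 8 * M"
        using level_band_Psi_diff[OF subsetD[OF assms(4) that(1)] subsetD[OF assms(4) that(2)]] by simp
      finally show ?thesis .
    qed
    show "ennreal (weight \<mu> \<nu> \<xi> x) \<le> ennreal (12 * R powr (\<mu> - \<nu>) * sqrt \<bar>x\<bar>)" if "x \<in> T" for x
    proof (rule ennreal_leI)
      have "1/3 * R \<le> \<bar>x\<bar>"
        using level_band_threshold[OF subsetD[OF assms(4) that]] large[OF that] abs_of_nonneg[OF assms(1)]
        by linarith
      have "weight \<mu> \<nu> \<xi> x \<le> 4 * \<bar>x\<bar> powr (\<mu> - \<nu>) * sqrt \<bar>x\<bar>"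
        by (rule weight[OF that])
      also have "\<dots> \<le> 4 * (3 * R powr (\<mu> - \<nu>)) * sqrt \<bar>x\<bar>"
        using powr_decay_le_threshold[of R "1/3" "\<bar>x\<bar>"] \<open>1/3 * R \<le> \<bar>x\<bar>\<close> assms
        by (intro mult_right_mono mult_left_mono) auto
      finally show "weight \<mu> \<nu> \<xi> x \<le> 12 * R powr (\<mu> - \<nu>) * sqrt \<bar>x\<bar>"
        by simp
    qed
  qed (use assms in auto)
  moreover have "7 * (12 * R powr (\<mu> - \<nu>)) * sqrt (8 * M) \<le> 252 * (sqrt M * R powr (\<mu> - \<nu>))"
  proof -
    have "sqrt (8 * M) \<le> 3 * sqrt M"
      using assms by (simp add: real_sqrt_mult mult_right_mono real_le_lsqrt)
    then have "R powr (\<mu> - \<nu>) * sqrt (8 * M) \<le> R powr (\<mu> - \<nu>) * (3 * sqrt M)"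
      by (intro mult_left_mono) auto
    then show ?thesis
      by (simp add: algebra_simps)
  qed
  ultimately show ?thesis
    by (elim upper_integral_le_bound_mono) (rule ennreal_leI)
qed

lemma upper_integral_le_band_negative:
  assumes "0 \<le> \<xi>" "1 \<le> M" "0 < R"
  shows "upper_integral_le (\<lambda>\<eta>. ennreal (weight \<mu> \<nu> \<xi> \<eta>)) (level_band \<xi> \<alpha> M R \<inter> {..-\<xi>/2})
    (ennreal (252 * (sqrt M * R powr (\<mu> - \<nu>))))"
proof (rule upper_integral_le_band_cubic)
  fix x assume x: "x \<in> level_band \<xi> \<alpha> M R \<inter> {..-\<xi>/2}"
  then have "x < 0"
    using level_band_threshold[of x \<xi> \<alpha> M R] assms by (auto simp: abs_if split: if_splits)
  then show "weight \<mu> \<nu> \<xi> x \<le> 4 * \<bar>x\<bar> powr (\<mu> - \<nu>) * sqrt \<bar>x\<bar>"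
    using weight_le_negative[OF assms(1)] x by auto
next
  fix x y assume "x \<in> level_band \<xi> \<alpha> M R \<inter> {..-\<xi>/2}" "y \<in> level_band \<xi> \<alpha> M R \<inter> {..-\<xi>/2}"
  then show "max (x\<^sup>2) (y\<^sup>2) \<le> 3 * \<bar>Psi_quot \<xi> x y\<bar>"
    using Psi_quot_ge_negative[of \<xi> x y] assms by auto
qed (use assms in auto)

lemma upper_integral_le_band_far:
  assumes "0 \<le> \<xi>" "1 \<le> M" "0 < R"
  shows "upper_integral_le (\<lambda>\<eta>. ennreal (weight \<mu> \<nu> \<xi> \<eta>)) (level_band \<xi> \<alpha> M R \<inter> {3*\<xi>..})
    (ennreal (252 * (sqrt M * R powr (\<mu> - \<nu>))))"
proof (rule upper_integral_le_band_cubic)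
  fix x assume x: "x \<in> level_band \<xi> \<alpha> M R \<inter> {3*\<xi>..}"
  then have "0 < x"
    using level_band_threshold[of x \<xi> \<alpha> M R] assms by (auto simp: abs_if split: if_splits)
  then show "weight \<mu> \<nu> \<xi> x \<le> 4 * \<bar>x\<bar> powr (\<mu> - \<nu>) * sqrt \<bar>x\<bar>"
    using weight_le_far[OF assms(1)] x by auto
next
  fix x y assume "x \<in> level_band \<xi> \<alpha> M R \<inter> {3*\<xi>..}" "y \<in> level_band \<xi> \<alpha> M R \<inter> {3*\<xi>..}"
  then show "max (x\<^sup>2) (y\<^sup>2) \<le> 3 * \<bar>Psi_quot \<xi> x y\<bar>"
    using Psi_quot_ge_far[of \<xi> x y] assms by auto
qed (use assms in auto)

lemma upper_integral_le_band_critical: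
  assumes "0 \<le> \<xi>" "1 \<le> M" "0 < R" "I \<in> critical_intervals \<xi>"
  shows "upper_integral_le (\<lambda>\<eta>. ennreal (weight \<mu> \<nu> \<xi> \<eta>)) (level_band \<xi> \<alpha> M R \<inter> I)
    (ennreal (400 * (sqrt M * R powr (\<mu> - \<nu>))))"
proof (rule upper_integral_le_from_point)
  let ?T = "level_band \<xi> \<alpha> M R \<inter> I"
  fix x0 assume x0: "x0 \<in> ?T"
  have I: "\<xi>/2 \<le> \<eta> \<and> \<eta> \<le> 3 * \<xi> \<and> \<xi>/6 \<le> \<bar>\<xi> - \<eta>\<bar>" if "\<eta> \<in> I" for \<eta>
    using assms(1,4) that by (auto simp: critical_intervals_def)
  have R: "1/4 * R \<le> \<xi>"
    using level_band_threshold[of x0 \<xi> \<alpha> M R] x0 I[of x0] assms(1) by (auto simp: abs_if split: if_splits)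
  then have "0 < \<xi>"
    using assms by linarith
  define d where "d = sqrt (3 * M / \<xi>)"
  have "?T \<subseteq> cball x0 d"
  proof
    fix y assume y: "y \<in> ?T"
    have "3/4 * \<xi> * (x0 - y)\<^sup>2 < 2 * M"
      using abs_Psi_diff_ge_critical[of \<xi> I x0 y] level_band_Psi_diff[of x0 \<xi> \<alpha> M R y] x0 y assms
      by auto
    then have "(x0 - y)\<^sup>2 \<le> 3 * M / \<xi>"
      using \<open>0 < \<xi>\<close> assms by (simp add: le_divide_eq algebra_simps)
    then show "y \<in> cball x0 d"
      unfolding d_def by (simp add: dist_real_def real_le_rsqrt)
  qed
  moreover have "weight \<mu> \<nu> \<xi> x \<le> 104 * sqrt \<xi> * R powr (\<mu> - \<nu>)" if "x \<in> ?T" for x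
  proof -
    have "weight \<mu> \<nu> \<xi> x \<le> 26 * sqrt \<xi> * \<xi> powr (\<mu> - \<nu>)"
      using weight_le_critical[OF \<open>0 < \<xi>\<close>] that I by auto
    also have "\<dots> \<le> 26 * sqrt \<xi> * (4 * R powr (\<mu> - \<nu>))"
      using powr_decay_le_threshold[of R "1/4" \<xi>] R assms by (intro mult_left_mono) auto
    finally show ?thesis
      by simp
  qed
  ultimately have "upper_integral_le (\<lambda>\<eta>. ennreal (weight \<mu> \<nu> \<xi> \<eta>)) ?T
      (ennreal (2 * (104 * sqrt \<xi> * R powr (\<mu> - \<nu>)) * d))"
    using \<open>0 < \<xi>\<close> assms(2) by (intro upper_integral_le_bounded_on_ball) (auto simp: d_def intro: ennreal_leI)
  moreover have "2 * (104 * sqrt \<xi> * R powr (\<mu> - \<nu>)) * d \<le> 400 * (sqrt M * R powr (\<mu> - \<nu>))"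
  proof -
    have "sqrt \<xi> * d = sqrt 3 * sqrt M"
      using \<open>0 < \<xi>\<close> assms by (simp add: d_def real_sqrt_divide real_sqrt_mult)
    moreover have "sqrt 3 \<le> 25/13"
      by (rule real_le_lsqrt) (auto simp: power2_eq_square)
    ultimately have "208 * (sqrt \<xi> * d) \<le> 400 * sqrt M"
      using assms by simp
    then have "208 * (sqrt \<xi> * d) * R powr (\<mu> - \<nu>) \<le> 400 * sqrt M * R powr (\<mu> - \<nu>)"
      by (intro mult_right_mono) auto
    then show ?thesis
      by (simp add: algebra_simps)
  qed
  ultimately show "upper_integral_le (\<lambda>\<eta>. ennreal (weight \<mu> \<nu> \<xi> \<eta>)) ?T
      (ennreal (400 * (sqrt M * R powr (\<mu> - \<nu>))))"
    by (elim upper_integral_le_bound_mono) (rule ennreal_leI)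
qed

lemma upper_integral_le_band_critical_intervals:
  assumes "0 \<le> \<xi>" "1 \<le> M" "0 < R"
  shows "upper_integral_le (\<lambda>\<eta>. ennreal (weight \<mu> \<nu> \<xi> \<eta>))
    (\<Union>I\<in>critical_intervals \<xi>. level_band \<xi> \<alpha> M R \<inter> I) (ennreal (1600 * (sqrt M * R powr (\<mu> - \<nu>))))"
proof -
  define B where "B = sqrt M * R powr (\<mu> - \<nu>)"
  have "0 \<le> B"
    using assms by (simp add: B_def)
  have "card (critical_intervals \<xi>) \<le> 4"
    by (simp add: critical_intervals_def card_insert_if)
  then have "real (card (critical_intervals \<xi>)) \<le> 4"
    by (metis of_nat_le_iff of_nat_numeral)
  then have "real (card (critical_intervals \<xi>)) * (400 * B) \<le> 4 * (400 * B)"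
    using \<open>0 \<le> B\<close> by (intro mult_right_mono) auto
  then have "of_nat (card (critical_intervals \<xi>)) * ennreal (400 * B) \<le> ennreal (1600 * B)"
    using \<open>0 \<le> B\<close> by (simp add: ennreal_of_nat_eq_real_of_nat ennreal_mult[symmetric] ennreal_leI)
  moreover have "upper_integral_le (\<lambda>\<eta>. ennreal (weight \<mu> \<nu> \<xi> \<eta>)) (\<Union>I\<in>critical_intervals \<xi>. level_band \<xi> \<alpha> M R \<inter> I)
      (of_nat (card (critical_intervals \<xi>)) * ennreal (400 * B))"
    using upper_integral_le_band_critical[OF assms] unfolding B_def
    by (intro upper_integral_le_UN) (auto simp: critical_intervals_def)
  ultimately show ?thesis
    unfolding B_def by (elim upper_integral_le_bound_mono)
qed

text \<open>
  Near the diagonal the band has length at most \<open>6M/\<xi>\<^sup>2\<close> but also lies in \<open>[5\<xi>/6, 3\<xi>/2]\<close>, so the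
  singularity \<open>|\<eta> - \<xi>|\<^sup>-\<^sup>\<nu>\<close> is integrated over a ball of radius \<open>m \<le> min (6M/\<xi>\<^sup>2) (\<xi>/2)\<close>;
  the bound \<open>m\<^sup>1\<^sup>-\<^sup>\<nu> \<le> (6M/\<xi>\<^sup>2)\<^sup>1\<^sup>/\<^sup>2 \<xi>\<^sup>1\<^sup>/\<^sup>2\<^sup>-\<^sup>\<nu>\<close> is where \<open>\<nu> < 1/2\<close> enters.
\<close>

lemma singular_mass_near_diagonal_le:
  assumes "1 \<le> \<xi>" "1 \<le> M" "2/5 * R \<le> \<xi>" "0 < R" "0 < m" "m \<le> 6 * M / \<xi>\<^sup>2" "m \<le> \<xi>/2"
  shows "6 * sqrt \<xi> * \<xi> powr \<mu> * (2 / (1 - \<nu>) + 2) * m powr (1 - \<nu>) \<le> 400 * (sqrt M * R powr (\<mu> - \<nu>))"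
proof -
  define d where "d = 6 * M / \<xi>\<^sup>2"
  have "0 < \<xi>" "0 < d"
    using assms by (auto simp: d_def)
  have "2 / (1 - \<nu>) + 2 \<le> 6"
    using exponents by (simp add: divide_le_eq)
  have "m powr (1 - \<nu>) = m powr (1/2) * m powr (1/2 - \<nu>)"
    by (simp add: powr_add[symmetric])
  also have "\<dots> \<le> d powr (1/2) * \<xi> powr (1/2 - \<nu>)"
  proof (rule mult_mono)
    show "m powr (1/2) \<le> d powr (1/2)"
      using assms(5,6) by (intro powr_mono2) (auto simp: d_def)
    have "m powr (1/2 - \<nu>) \<le> (\<xi>/2) powr (1/2 - \<nu>)"
      using assms(5,7) exponents by (intro powr_mono2) auto
    also have "\<dots> \<le> \<xi> powr (1/2 - \<nu>)"
      using \<open>0 < \<xi>\<close> exponents by (intro powr_mono2) auto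
    finally show "m powr (1/2 - \<nu>) \<le> \<xi> powr (1/2 - \<nu>)" .
  qed auto
  also have "\<dots> = sqrt 6 * sqrt M * (\<xi> powr (1/2 - \<nu>) / \<xi>)"
    using \<open>0 < \<xi>\<close> \<open>0 < d\<close> assms by (simp add: powr_half_sqrt d_def real_sqrt_divide real_sqrt_mult)
  finally have "6 * sqrt \<xi> * \<xi> powr \<mu> * (2 / (1 - \<nu>) + 2) * m powr (1 - \<nu>)
      \<le> 6 * sqrt \<xi> * \<xi> powr \<mu> * 6 * (sqrt 6 * sqrt M * (\<xi> powr (1/2 - \<nu>) / \<xi>))"
    using \<open>2 / (1 - \<nu>) + 2 \<le> 6\<close> \<open>0 < \<xi>\<close> \<open>0 < m\<close> exponents by (intro mult_mono) auto
  also have "\<dots> = 36 * sqrt 6 * sqrt M * (sqrt \<xi> * \<xi> powr \<mu> * \<xi> powr (1/2 - \<nu>)) / \<xi>"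
    by (simp add: field_simps)
  also have "\<dots> = 36 * sqrt 6 * sqrt M * \<xi> powr (\<mu> - \<nu>)"
  proof -
    have "sqrt \<xi> * \<xi> powr \<mu> * \<xi> powr (1/2 - \<nu>) = \<xi> powr (1/2) * \<xi> powr \<mu> * \<xi> powr (1/2 - \<nu>)"
      using \<open>0 < \<xi>\<close> by (simp add: powr_half_sqrt)
    also have "\<dots> = \<xi> powr (1/2 + \<mu> + (1/2 - \<nu>))"
      by (simp only: powr_add)
    also have "\<dots> = \<xi> powr (1 + (\<mu> - \<nu>))"
      by (rule arg_cong[where f = "\<lambda>e. \<xi> powr e"]) simp
    also have "\<dots> = \<xi> * \<xi> powr (\<mu> - \<nu>)"
      using \<open>0 < \<xi>\<close> by (simp add: powr_add)
    finally show ?thesis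
      using \<open>0 < \<xi>\<close> by simp
  qed
  also have "\<dots> \<le> 36 * sqrt 6 * sqrt M * (5/2 * R powr (\<mu> - \<nu>))"
    using powr_decay_le_threshold[of R "2/5" \<xi>] assms by (intro mult_left_mono) auto
  also have "\<dots> \<le> 400 * (sqrt M * R powr (\<mu> - \<nu>))"
  proof -
    have "sqrt 6 \<le> 5/2"
      by (rule real_le_lsqrt) (auto simp: power2_eq_square)
    then show ?thesis
      using assms by (simp add: mult_right_mono)
  qed
  finally show ?thesis .
qed

lemma upper_integral_le_band_near_diagonal:
  assumes "1 \<le> \<xi>" "1 \<le> M" "0 < R"
  shows "upper_integral_le (\<lambda>\<eta>. ennreal (weight \<mu> \<nu> \<xi> \<eta>)) (level_band \<xi> \<alpha> M R \<inter> {5*\<xi>/6..3*\<xi>/2})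
    (ennreal (400 * (sqrt M * R powr (\<mu> - \<nu>))))"
proof (rule upper_integral_le_from_point)
  let ?T = "level_band \<xi> \<alpha> M R \<inter> {5*\<xi>/6..3*\<xi>/2}"
  fix x0 assume x0: "x0 \<in> ?T"
  have "0 < \<xi>"
    using assms by auto
  have R: "2/5 * R \<le> \<xi>"
    using level_band_threshold[of x0 \<xi> \<alpha> M R] x0 assms by (auto simp: abs_if split: if_splits)
  define d where "d = 6 * M / \<xi>\<^sup>2"
  have "0 < d"
    using \<open>0 < \<xi>\<close> assms by (simp add: d_def)
  define m where "m = min d (\<xi>/2)"
  have "0 < m"
    using \<open>0 < d\<close> \<open>0 < \<xi>\<close> by (simp add: m_def)
  have close: "\<bar>x0 - y\<bar> \<le> d" if "y \<in> ?T" for y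
  proof -
    have "\<xi>\<^sup>2/2 \<le> - Psi_quot \<xi> x0 y"
      using Psi_quot_le_near_diagonal[of \<xi> x0 y] x0 that \<open>0 < \<xi>\<close> by auto
    then have "3/4 * \<bar>x0 - y\<bar> * (\<xi>\<^sup>2/2) \<le> \<bar>Psi \<xi> x0 - Psi \<xi> y\<bar>"
      unfolding abs_Psi_diff by (intro mult_left_mono) auto
    also have "\<dots> < 2 * M"
      using level_band_Psi_diff x0 that by blast
    finally have "\<bar>x0 - y\<bar> * \<xi>\<^sup>2 \<le> 6 * M"
      using assms by simp
    then show ?thesis
      using \<open>0 < \<xi>\<close> by (simp add: d_def le_divide_eq)
  qed
  have "?T \<subseteq> cball (if d \<le> \<xi>/2 then x0 else \<xi>) m"
  proof
    fix y assume y: "y \<in> ?T"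
    have "\<bar>\<xi> - y\<bar> \<le> \<xi>/2"
      using y by (intro abs_leI) auto
    with close[OF y] show "y \<in> cball (if d \<le> \<xi>/2 then x0 else \<xi>) m"
      by (simp add: m_def dist_real_def)
  qed
  then have "upper_integral_le (\<lambda>\<eta>. ennreal (weight \<mu> \<nu> \<xi> \<eta>)) ?T
      (ennreal (6 * sqrt \<xi> * \<xi> powr \<mu> * (2 / (1 - \<nu>) + 2) * m powr (1 - \<nu>)))"
    using weight_le_near_diagonal[OF assms(1)] \<open>0 < m\<close> \<open>0 < \<xi>\<close> exponents
    by (intro upper_integral_le_singular_on_ball[where p = \<xi>]) (auto intro: ennreal_leI)
  moreover have "6 * sqrt \<xi> * \<xi> powr \<mu> * (2 / (1 - \<nu>) + 2) * m powr (1 - \<nu>)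
      \<le> 400 * (sqrt M * R powr (\<mu> - \<nu>))"
    using \<open>0 < m\<close> by (intro singular_mass_near_diagonal_le assms R) (auto simp: m_def d_def)
  ultimately show "upper_integral_le (\<lambda>\<eta>. ennreal (weight \<mu> \<nu> \<xi> \<eta>)) ?T
      (ennreal (400 * (sqrt M * R powr (\<mu> - \<nu>))))"
    by (elim upper_integral_le_bound_mono) (rule ennreal_leI)
qed

lemma upper_integral_le_band_near_diagonal_small:
  assumes "0 \<le> \<xi>" "\<xi> < 1" "1 \<le> M" "0 < R"
  shows "upper_integral_le (\<lambda>\<eta>. ennreal (weight \<mu> \<nu> \<xi> \<eta>)) (level_band \<xi> \<alpha> M R \<inter> {5*\<xi>/6..3*\<xi>/2})
    (ennreal (23 * (sqrt M * R powr (\<mu> - \<nu>))))"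
proof (rule upper_integral_le_from_point)
  let ?T = "level_band \<xi> \<alpha> M R \<inter> {5*\<xi>/6..3*\<xi>/2}"
  fix x0 assume x0: "x0 \<in> ?T"
  have "R \<le> 5/2 * \<xi>"
    using level_band_threshold[of x0 \<xi> \<alpha> M R] x0 assms by (auto simp: abs_if split: if_splits)
  then have "0 < \<xi>" "R \<le> 5/2"
    using assms by linarith+
  have "?T \<subseteq> cball \<xi> (\<xi>/2)"
    using \<open>0 < \<xi>\<close> by (auto simp: dist_real_def abs_if)
  moreover have "ennreal (weight \<mu> \<nu> \<xi> x) \<le> ennreal 9" if "x \<in> ?T" for x
    using that \<open>0 < \<xi>\<close> assms by (intro ennreal_leI weight_le_near_diagonal_small) auto
  ultimately have "upper_integral_le (\<lambda>\<eta>. ennreal (weight \<mu> \<nu> \<xi> \<eta>)) ?T (ennreal (2 * 9 * (\<xi>/2)))"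
    using \<open>0 < \<xi>\<close> by (intro upper_integral_le_bounded_on_ball) auto
  moreover have "2 * 9 * (\<xi>/2) \<le> 23 * (sqrt M * R powr (\<mu> - \<nu>))"
  proof -
    have "(5/2) powr (-1) \<le> (5/2) powr (\<mu> - \<nu>)"
      using exponents by (intro powr_mono) auto
    also have "\<dots> \<le> R powr (\<mu> - \<nu>)"
      using \<open>R \<le> 5/2\<close> assms exponents by (intro powr_mono2') auto
    finally have "1 * (2/5) \<le> sqrt M * R powr (\<mu> - \<nu>)"
      using assms by (intro mult_mono) (auto simp: powr_minus_divide)
    then show ?thesis
      using assms by linarith
  qed
  ultimately show "upper_integral_le (\<lambda>\<eta>. ennreal (weight \<mu> \<nu> \<xi> \<eta>)) ?T
      (ennreal (23 * (sqrt M * R powr (\<mu> - \<nu>))))"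
    by (elim upper_integral_le_bound_mono) (rule ennreal_leI)
qed

lemma upper_integral_le_band_nonneg:
  assumes "0 \<le> \<xi>" "1 \<le> M" "0 < R"
  shows "upper_integral_le (\<lambda>\<eta>. ennreal (weight \<mu> \<nu> \<xi> \<eta>)) (level_band \<xi> \<alpha> M R)
    (ennreal (2600 * (sqrt M * R powr (\<mu> - \<nu>))))"
proof -
  let ?f = "\<lambda>\<eta>. ennreal (weight \<mu> \<nu> \<xi> \<eta>)" and ?S = "level_band \<xi> \<alpha> M R"
  define B where "B = sqrt M * R powr (\<mu> - \<nu>)"
  have "0 \<le> B"
    using assms by (simp add: B_def)
  have critical: "upper_integral_le ?f (\<Union>I\<in>critical_intervals \<xi>. ?S \<inter> I) (ennreal (1600 * B))"
    using upper_integral_le_band_critical_intervals[OF assms] by (simp add: B_def)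
  have diagonal: "upper_integral_le ?f (?S \<inter> {5*\<xi>/6..3*\<xi>/2}) (ennreal (400 * B))"
  proof (cases "1 \<le> \<xi>")
    case True
    then show ?thesis
      using upper_integral_le_band_near_diagonal assms by (simp add: B_def)
  next
    case False
    then have "upper_integral_le ?f (?S \<inter> {5*\<xi>/6..3*\<xi>/2}) (ennreal (23 * B))"
      using upper_integral_le_band_near_diagonal_small[of \<xi> M R \<alpha>] assms by (simp add: B_def)
    then show ?thesis
      using \<open>0 \<le> B\<close> by (elim upper_integral_le_bound_mono) (simp add: ennreal_leI)
  qed
  have "upper_integral_le ?f ((?S \<inter> {-\<xi>/2..\<xi>/2}) \<union> (?S \<inter> {..-\<xi>/2}) \<union> (?S \<inter> {3*\<xi>..})
      \<union> (\<Union>I\<in>critical_intervals \<xi>. ?S \<inter> I) \<union> (?S \<inter> {5*\<xi>/6..3*\<xi>/2}))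
      (ennreal (36 * B) + ennreal (252 * B) + ennreal (252 * B) + ennreal (1600 * B) + ennreal (400 * B))"
    using upper_integral_le_band_near_origin[OF assms] upper_integral_le_band_negative[OF assms]
      upper_integral_le_band_far[OF assms] critical diagonal
    unfolding B_def by (intro upper_integral_le_Un)
  moreover have "?S \<subseteq> (?S \<inter> {-\<xi>/2..\<xi>/2}) \<union> (?S \<inter> {..-\<xi>/2}) \<union> (?S \<inter> {3*\<xi>..})
      \<union> (\<Union>I\<in>critical_intervals \<xi>. ?S \<inter> I) \<union> (?S \<inter> {5*\<xi>/6..3*\<xi>/2})"
    using real_line_cover[OF assms(1)] by blast
  ultimately have "upper_integral_le ?f ?S
      (ennreal (36 * B) + ennreal (252 * B) + ennreal (252 * B) + ennreal (1600 * B) + ennreal (400 * B))"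
    by (rule upper_integral_le_mono) auto
  then show ?thesis
    using \<open>0 \<le> B\<close> unfolding B_def[symmetric]
    by (elim upper_integral_le_bound_mono) (simp add: ennreal_plus[symmetric] del: ennreal_plus)
qed

lemma upper_integral_le_band:
  assumes "1 \<le> M" "0 < R"
  shows "upper_integral_le (\<lambda>\<eta>. ennreal (weight \<mu> \<nu> \<xi> \<eta>)) (level_band \<xi> \<alpha> M R)
    (ennreal (2600 * (sqrt M * R powr (\<mu> - \<nu>))))"
proof (cases "0 \<le> \<xi>")
  case True
  then show ?thesis
    using upper_integral_le_band_nonneg assms by blast
next
  case False
  then have "upper_integral_le (\<lambda>\<eta>. ennreal (weight \<mu> \<nu> (-\<xi>) \<eta>)) (level_band (-\<xi>) (-\<alpha>) M R)
      (ennreal (2600 * (sqrt M * R powr (\<mu> - \<nu>))))"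
    using assms by (intro upper_integral_le_band_nonneg) auto
  from upper_integral_le_reflect[OF this] show ?thesis
    by (simp add: weight_minus uminus_level_band)
qed

lemma set_nn_integral_weight_Dreg_le:
  assumes "0 < \<tau>" "1 \<le> M"
  shows "(\<integral>\<^sup>+ \<eta>\<in>{\<eta>. (\<xi>, \<eta>) \<in> Dreg \<tau> \<and> \<bar>Psi \<xi> \<eta> - \<alpha>\<bar> < M}. ennreal (weight \<mu> \<nu> \<xi> \<eta>) \<partial>lborel)
    \<le> ennreal (26000 * sqrt M * \<tau> powr ((\<nu> - \<mu>) / 3))"
proof -
  define R where "R = \<tau> powr (-1/3) / 10"
  have "0 < R"
    using assms by (simp add: R_def)
  have band: "{\<eta>. (\<xi>, \<eta>) \<in> Dreg \<tau> \<and> \<bar>Psi \<xi> \<eta> - \<alpha>\<bar> < M} = level_band \<xi> \<alpha> M R"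
    by (auto simp: Dreg_def level_band_def R_def)
  have "(\<integral>\<^sup>+ \<eta>\<in>level_band \<xi> \<alpha> M R. ennreal (weight \<mu> \<nu> \<xi> \<eta>) \<partial>lborel)
      \<le> ennreal (2600 * (sqrt M * R powr (\<mu> - \<nu>)))"
    using upper_integral_le_band[OF assms(2) \<open>0 < R\<close>] by (rule set_nn_integral_le_if_upper_integral_le)
  moreover have "sqrt M * R powr (\<mu> - \<nu>) \<le> sqrt M * (10 * \<tau> powr ((\<nu> - \<mu>) / 3))"
    using threshold_powr_le[of \<tau> \<mu> \<nu>] exponents assms unfolding R_def by (intro mult_left_mono) auto
  then have "ennreal (2600 * (sqrt M * R powr (\<mu> - \<nu>))) \<le> ennreal (26000 * sqrt M * \<tau> powr ((\<nu> - \<mu>) / 3))"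
    by (intro ennreal_leI) simp
  ultimately show ?thesis
    unfolding band by (rule order_trans)
qed

end

theorem proposition3p10:
  fixes \<mu> \<nu> :: real
  assumes "0 < \<mu>" and "\<mu> < \<nu>" and "\<nu> < 1/2"
  shows "\<exists>C>0. \<forall>\<tau> M \<xi> \<alpha>. 0 < \<tau> \<longrightarrow> \<tau> < 1 \<longrightarrow> 1 \<le> M \<longrightarrow>
    (\<integral>\<^sup>+ \<eta>\<in>{\<eta>. (\<xi>, \<eta>) \<in> Dreg \<tau> \<and> \<bar>Psi \<xi> \<eta> - \<alpha>\<bar> < M}.
        ennreal (max \<bar>\<xi>\<bar> \<bar>\<eta>\<bar> * jb \<xi> powr \<mu> / (sqrt \<bar>\<eta>\<bar> * jb (\<xi> - \<eta>) powr \<nu>)) \<partial>lborel)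
    \<le> ennreal (C * sqrt M * \<tau> powr ((\<nu> - \<mu>) / 3))"
  using set_nn_integral_weight_Dreg_le[OF assms] unfolding weight_def
  by (intro exI[of _ 26000]) auto

end
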